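(* Let $1<p<2$ and let $\{T_{-k}\}_{k\in\mathbb Z_+}$ be a sequence of $L^p$-tempered distributions on $\mathfrak X$ such that (1) $\mathcal L T_{-k}=\lambda T_{-k+1}$ for all $k\ge1$, for some nonzero $\lambda\in\mathbb C$, and (2) there exist $M>0$ and a fixed seminorm $\nu=\nu_m$ ($m\in\mathbb N$) of $\mathcal S_p(\mathfrak X)$ such that $|\langle T_{-k},\phi\rangle|\le M\nu(\phi)$ for all $\phi\in\mathcal S_p(\mathfrak X)$ and all $k\in\mathbb Z_+$. Then: (a) if $|\lambda|=\gamma(\tau/2+i\delta_{p'})$, then $\mathcal L T_0=|\lambda|T_0$; (b) if $|\lambda|>\gamma(\tau/2+i\delta_{p'})$, then $T_{-k}=0$ for all $k\in\mathbb Z_+$; (c) if $\gamma(\tau/2+i\delta_{p'})>|\lambda|>\gamma(i\delta_{p'})$, then there exists a sequence $\{T_{-k}\}_{k\in\mathbb Z_+}$ satisfying (1) and (2) for which $T_0$ is not an eigendistribution of $\mathcal L$.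
   Context: $\mathfrak X$ is a homogeneous tree of degree $q+1$, $q\ge2$, identified with its vertex set, with graph distance $d$, base vertex $o$, and $|x|=d(o,x)$. The Laplacian is $\mathcal L f(x)=f(x)-\frac{1}{q+1}\sum_{y:d(x,y)=1}f(y)$. $\tau=2\pi/\log q$, $\gamma(z)=1-\frac{q^{1/2+iz}+q^{1/2-iz}}{q+1}$, $p'=p/(p-1)$, $\delta_r=\frac1r-\frac12$; $\mathbb Z_+$ is the set of nonnegative integers. For $1<p\le2$, $\mathcal S_p(\mathfrak X)$ is the Fréchet space of functions $f$ on $\mathfrak X$ with $\nu_m(f)=\sup_{x\in\mathfrak X}(1+|x|)^m q^{|x|/p}|f(x)|<\infty$ for all $m\in\mathbb N$. An $L^p$-tempered distribution is a linear functional $T$ on $\mathcal S_p(\mathfrak X)$ with $\langle T,f_n\rangle\to0$ whenever $\nu_m(f_n)\to0$ for all $m$. The Laplacian acts on distributions by $\langle\mathcal L T,\phi\rangle=\langle T,\mathcal L\phi\rangle$; $T$ is an eigendistribution of $\mathcal L$ if $\mathcal LT=cT$ for some $c\in\mathbb C$. *)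

theory Defs
  imports Complex_Main
begin

text \<open>Concrete model of the homogeneous tree of degree q+1: vertices are finite
  words xs (root o = []) with first letter in {0..q} and later letters in {0..q-1};
  the neighbours of xs are its parent (butlast) and its children xs @ [a].\<close>

definition tree_vertices :: "nat \<Rightarrow> nat list set" where
  "tree_vertices q = {xs. \<forall>i<length xs. (if i = 0 then xs ! i < q + 1 else xs ! i < q)}"

definition tree_adj :: "nat list \<Rightarrow> nat list \<Rightarrow> bool" where
  "tree_adj x y \<longleftrightarrow> (\<exists>a. y = x @ [a]) \<or> (\<exists>a. x = y @ [a])"

definition tree_neighbors :: "nat \<Rightarrow> nat list \<Rightarrow> nat list set" where
  "tree_neighbors q x = {y \<in> tree_vertices q. tree_adj x y}"

fun lcp_len :: "nat list \<Rightarrow> nat list \<Rightarrow> nat" where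
  "lcp_len (a # xs) (b # ys) = (if a = b then Suc (lcp_len xs ys) else 0)"
| "lcp_len _ _ = 0"

definition tree_dist :: "nat list \<Rightarrow> nat list \<Rightarrow> nat" where
  "tree_dist x y = length x + length y - 2 * lcp_len x y"

definition tree_norm :: "nat list \<Rightarrow> nat" where
  "tree_norm x = tree_dist [] x"

definition weight :: "nat \<Rightarrow> real \<Rightarrow> nat \<Rightarrow> nat list \<Rightarrow> real" where
  "weight q p m x = (1 + real (tree_norm x)) ^ m * real q powr (real (tree_norm x) / p)"

definition nu :: "nat \<Rightarrow> real \<Rightarrow> nat \<Rightarrow> (nat list \<Rightarrow> complex) \<Rightarrow> real" where
  "nu q p m f = (SUP x\<in>tree_vertices q. weight q p m x * cmod (f x))"

definition Sp :: "nat \<Rightarrow> real \<Rightarrow> (nat list \<Rightarrow> complex) set" where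
  "Sp q p = {f. (\<forall>x. x \<notin> tree_vertices q \<longrightarrow> f x = 0) \<and>
       (\<forall>m. bdd_above ((\<lambda>x. weight q p m x * cmod (f x)) ` tree_vertices q))}"

definition tempered :: "nat \<Rightarrow> real \<Rightarrow> ((nat list \<Rightarrow> complex) \<Rightarrow> complex) \<Rightarrow> bool" where
  "tempered q p T \<longleftrightarrow>
     (\<forall>f\<in>Sp q p. \<forall>g\<in>Sp q p. \<forall>c. T (\<lambda>x. f x + g x) = T f + T g \<and> T (\<lambda>x. c * f x) = c * T f) \<and>
     (\<forall>F. (\<forall>n. F n \<in> Sp q p) \<and> (\<forall>m. (\<lambda>n. nu q p m (F n)) \<longlonglongrightarrow> 0)
          \<longrightarrow> (\<lambda>n. T (F n)) \<longlonglongrightarrow> 0)"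

definition lap :: "nat \<Rightarrow> (nat list \<Rightarrow> complex) \<Rightarrow> nat list \<Rightarrow> complex" where
  "lap q f x = (if x \<in> tree_vertices q
      then f x - (1 / (of_nat q + 1)) * (\<Sum>y\<in>tree_neighbors q x. f y) else 0)"

definition eigendist :: "nat \<Rightarrow> real \<Rightarrow> ((nat list \<Rightarrow> complex) \<Rightarrow> complex) \<Rightarrow> bool" where
  "eigendist q p T \<longleftrightarrow> (\<exists>c. \<forall>\<phi>\<in>Sp q p. T (lap q \<phi>) = c * T \<phi>)"

text \<open>Conditions (1) and (2) on a sequence T k = T_{-k} of L^p-tempered distributions.\<close>
definition seq_cond :: "nat \<Rightarrow> real \<Rightarrow> complex \<Rightarrow> (nat \<Rightarrow> (nat list \<Rightarrow> complex) \<Rightarrow> complex) \<Rightarrow> bool" where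
  "seq_cond q p lam T \<longleftrightarrow>
     (\<forall>k. tempered q p (T k)) \<and>
     (\<forall>k\<ge>1. \<forall>\<phi>\<in>Sp q p. T k (lap q \<phi>) = lam * T (k - 1) \<phi>) \<and>
     (\<exists>M>0. \<exists>m. \<forall>\<phi>\<in>Sp q p. \<forall>k. cmod (T k \<phi>) \<le> M * nu q p m \<phi>)"

definition tau :: "nat \<Rightarrow> real" where
  "tau q = 2 * pi / ln (real q)"

definition gamma_fn :: "nat \<Rightarrow> complex \<Rightarrow> complex" where
  "gamma_fn q z = 1 - (exp ((1/2 + \<i> * z) * of_real (ln (real q)))
                     + exp ((1/2 - \<i> * z) * of_real (ln (real q)))) / (of_nat q + 1)"

definition conj_exp :: "real \<Rightarrow> real" where
  "conj_exp p = p / (p - 1)"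

definition delta :: "real \<Rightarrow> real" where
  "delta r = 1 / r - 1 / 2"

end

theory Submission
  imports Defs "HOL-Analysis.Summation_Tests" "HOL-Real_Asymp.Real_Asymp"
begin

text \<open>Write \<open>\<L> = \<gamma>\<^sub>0 U\<close> with \<open>\<gamma>\<^sub>0 = \<gamma>(\<tau>/2 + i\<delta>\<^sub>p\<^sub>')\<close> and \<open>U = b I + a R\<close>, \<open>a + b = 1\<close>, where the
  normalised neighbour sum \<open>R\<close> maps the envelope \<open>q\<^sup>-\<^sup>|\<^sup>x\<^sup>|\<^sup>/\<^sup>p (1 + |x| - D)\<^sup>-\<^sup>m\<close> into the one with
  \<open>D + 1\<close>. So \<open>U\<^sup>n\<close> is a binomial average of \<open>R\<^sup>0, \<dots>, R\<^sup>n\<close> and every seminorm \<open>\<nu>\<^sub>m\<close> grows only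
  polynomially along \<open>U\<^sup>n\<close>, while \<open>T\<^sub>-\<^sub>k\<^sub>-\<^sub>N(U\<^sup>N \<phi>) = (\<lambda>/\<gamma>\<^sub>0)\<^sup>N T\<^sub>-\<^sub>k(\<phi>)\<close>.
  (b) For \<open>|\<lambda>| > \<gamma>\<^sub>0\<close> this forces \<open>T\<^sub>-\<^sub>k = 0\<close>.
  (a) For \<open>|\<lambda>| = \<gamma>\<^sub>0\<close>, \<open>U\<^sup>n(U - I)\<close> has norm \<open>O(n\<^sup>-\<^sup>1\<^sup>/\<^sup>2)\<close> (binomial variance), so
  \<open>T\<^sub>-\<^sub>k \<circ> (U - I)\<^sup>2\<^sup>m\<^sup>+\<^sup>2 = 0\<close>; since a bounded Jordan chain with unimodular eigenvalue is
  trivial, one descends to \<open>T\<^sub>0 \<circ> (U - I) = 0\<close>.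
  (c) Below \<open>\<gamma>\<^sub>0\<close> the spherical functions with parameter \<open>q\<^sup>-\<^sup>1\<^sup>/\<^sup>p e\<^sup>\<plusminus>\<^sup>i\<^sup>\<theta>\<close> give two radial
  functionals with distinct eigenvalues \<open>\<mu>\<^sub>1, \<mu>\<^sub>2\<close> of modulus \<open>|\<lambda>|\<close>; then
  \<open>T\<^sub>-\<^sub>k = (\<lambda>/\<mu>\<^sub>1)\<^sup>k S\<^sub>1 + (\<lambda>/\<mu>\<^sub>2)\<^sup>k S\<^sub>2\<close> satisfies (1) and (2), but \<open>T\<^sub>0\<close> is no eigendistribution.\<close>

lemma norm_le_div_Suc_imp_zero:
  fixes z :: "'a :: real_normed_vector"
  assumes "\<And>n. norm z \<le> C / real (Suc n)"
  shows "z = 0"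
proof (rule ccontr)
  assume "z \<noteq> 0"
  then have z: "norm z > 0" by simp
  obtain n where n: "real n > C / norm z"
    using reals_Archimedean2 by blast
  have "norm z * real (Suc n) \<le> C"
    using assms[of n] by (simp add: field_simps)
  moreover have "C < norm z * real n"
    using n z by (simp add: field_simps)
  ultimately show False
    using z by (simp add: algebra_simps)
qed

lemma summable_inverse_Suc_square: "summable (\<lambda>n. 1 / (1 + real n) ^ 2)"
proof -
  have "summable (\<lambda>n. inverse (real n ^ 2))"
    by (rule inverse_power_summable) simp
  then have "summable (\<lambda>n. inverse (real (Suc n) ^ 2))"
    by (subst summable_Suc_iff)
  then show ?thesis
    by (simp add: inverse_eq_divide add.commute)
qed

text \<open>A bounded orbit of a \<open>2 \<times> 2\<close> Jordan block with unimodular eigenvalue has vanishing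
  top component: otherwise \<open>R k\<close> would grow linearly in \<open>k\<close>.\<close>

lemma bounded_jordan_chain_top_eq_0:
  fixes \<omega> :: complex and S R :: "nat \<Rightarrow> complex"
  assumes "cmod \<omega> = 1"
    and S_Suc: "\<And>k. S (Suc k) = \<omega> * S k"
    and R_Suc: "\<And>k. \<omega> * R k = S (Suc k) + R (Suc k)"
    and bounded: "\<And>k. cmod (R k) \<le> B"
  shows "S 0 = 0"
proof -
  have S: "S k = \<omega> ^ k * S 0" for k
    by (induction k) (simp_all add: S_Suc)
  have R: "R k = \<omega> ^ k * (R 0 - of_nat k * S 0)" for k
  proof (induction k)
    case (Suc k)
    have "R (Suc k) = \<omega> * R k - \<omega> ^ Suc k * S 0"
      using R_Suc[of k] S[of "Suc k"] by (simp add: algebra_simps)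
    then show ?case
      unfolding Suc.IH by (simp add: algebra_simps)
  qed simp
  show ?thesis
  proof (rule norm_le_div_Suc_imp_zero)
    fix n
    have R_Suc_n: "cmod (R 0 - of_nat (Suc n) * S 0) = cmod (R (Suc n))"
      unfolding R[of "Suc n"] using assms(1) by (simp add: norm_mult norm_power)
    have "real (Suc n) * cmod (S 0) = cmod (of_nat (Suc n) * S 0)"
      by (simp only: norm_mult norm_of_nat)
    also have "\<dots> \<le> cmod (R 0) + cmod (R (Suc n))"
      using norm_triangle_ineq4[of "R 0" "R 0 - of_nat (Suc n) * S 0"] R_Suc_n by simp
    also have "\<dots> \<le> cmod (R 0) + B"
      using bounded by simp
    finally show "cmod (S 0) \<le> (cmod (R 0) + B) / real (Suc n)"
      by (simp add: field_simps del: of_nat_Suc)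
  qed
qed

lemma summable_norm_of_inverse_square_bound:
  fixes h :: "nat \<Rightarrow> 'a :: real_normed_vector"
  assumes "\<And>n. norm (h n) \<le> K / (1 + real n) ^ 2"
  shows "summable (\<lambda>n. norm (h n))"
  by (rule summable_comparison_test'[OF summable_mult[OF summable_inverse_Suc_square, of K]])
     (use assms in simp)

section \<open>Neighbours and spheres in the tree\<close>

lemma tree_norm_eq_length: "tree_norm x = length x"
  by (simp add: tree_norm_def tree_dist_def)

definition num_children :: "nat \<Rightarrow> nat list \<Rightarrow> nat" where
  "num_children q x = (if x = [] then q + 1 else q)"

lemma snoc_in_tree_vertices_iff:
  "x @ [a] \<in> tree_vertices q \<longleftrightarrow> x \<in> tree_vertices q \<and> a < num_children q x"
  unfolding tree_vertices_def num_children_def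
  by (auto simp: nth_append less_Suc_eq all_conj_distrib split: if_splits)

lemma butlast_in_tree_vertices: "x \<in> tree_vertices q \<Longrightarrow> butlast x \<in> tree_vertices q"
  by (cases x rule: rev_cases) (auto simp: snoc_in_tree_vertices_iff)

lemma Nil_in_tree_vertices: "[] \<in> tree_vertices q"
  by (simp add: tree_vertices_def)

lemma tree_neighbors_eq:
  assumes "x \<in> tree_vertices q"
  shows "tree_neighbors q x =
    (if x = [] then {} else {butlast x}) \<union> (\<lambda>a. x @ [a]) ` {..<num_children q x}"
proof (intro set_eqI iffI)
  fix y assume "y \<in> tree_neighbors q x"
  then have y: "y \<in> tree_vertices q" and "(\<exists>a. y = x @ [a]) \<or> (\<exists>a. x = y @ [a])"
    unfolding tree_neighbors_def tree_adj_def by auto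
  then consider a where "y = x @ [a]" "a < num_children q x" | a where "x = y @ [a]"
    using snoc_in_tree_vertices_iff by blast
  then show "y \<in> (if x = [] then {} else {butlast x}) \<union> (\<lambda>a. x @ [a]) ` {..<num_children q x}"
    by cases auto
next
  fix y assume y: "y \<in> (if x = [] then {} else {butlast x}) \<union> (\<lambda>a. x @ [a]) ` {..<num_children q x}"
  show "y \<in> tree_neighbors q x"
  proof (cases "y = butlast x \<and> x \<noteq> []")
    case True
    then have "x = y @ [last x]" by simp
    with True assms show ?thesis
      unfolding tree_neighbors_def tree_adj_def using butlast_in_tree_vertices by blast
  next
    case False
    with y obtain a where "y = x @ [a]" "a < num_children q x"
      by (auto split: if_splits)
    with assms show ?thesis
      unfolding tree_neighbors_def tree_adj_def by (auto simp: snoc_in_tree_vertices_iff)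
  qed
qed

lemma sum_tree_neighbors:
  assumes "x \<in> tree_vertices q"
  shows "(\<Sum>y\<in>tree_neighbors q x. f y) =
    (if x = [] then 0 else f (butlast x)) + (\<Sum>a<num_children q x. f (x @ [a]))"
proof -
  have disj: "(if x = [] then {} else {butlast x}) \<inter> (\<lambda>a. x @ [a]) ` {..<num_children q x} = {}"
    by (auto dest: arg_cong[of _ _ length])
  have inj: "inj_on (\<lambda>a. x @ [a]) {..<num_children q x}"
    by (auto simp: inj_on_def)
  show ?thesis
    using assms by (simp add: tree_neighbors_eq sum.union_disjoint[OF _ _ disj] sum.reindex[OF inj])
qed

lemma length_le_Suc_length_neighbor:
  "x \<in> tree_vertices q \<Longrightarrow> y \<in> tree_neighbors q x \<Longrightarrow> length x \<le> Suc (length y)"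
  by (auto simp: tree_neighbors_eq split: if_splits)

definition tree_sphere :: "nat \<Rightarrow> nat \<Rightarrow> nat list set" where
  "tree_sphere q n = {x \<in> tree_vertices q. length x = n}"

lemma tree_vertices_letters: "x \<in> tree_vertices q \<Longrightarrow> set x \<subseteq> {..q}"
  unfolding tree_vertices_def by (fastforce simp: in_set_conv_nth split: if_splits)

lemma finite_tree_sphere: "finite (tree_sphere q n)"
proof (rule finite_subset)
  show "tree_sphere q n \<subseteq> {xs. set xs \<subseteq> {..q} \<and> length xs = n}"
    unfolding tree_sphere_def using tree_vertices_letters by auto
qed (simp add: finite_lists_length_eq)

lemma tree_sphere_0: "tree_sphere q 0 = {[]}"
  unfolding tree_sphere_def using Nil_in_tree_vertices by auto

lemma tree_sphere_Suc:
  "tree_sphere q (Suc n) = (\<lambda>(y, a). y @ [a]) ` (SIGMA y:tree_sphere q n. {..<num_children q y})"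
proof (intro set_eqI iffI)
  fix x assume x: "x \<in> tree_sphere q (Suc n)"
  then have x_eq: "x = butlast x @ [last x]"
    unfolding tree_sphere_def by (cases x rule: rev_cases) auto
  have "butlast x @ [last x] \<in> tree_vertices q"
    using x x_eq unfolding tree_sphere_def by simp
  then have "butlast x \<in> tree_vertices q" "last x < num_children q (butlast x)"
    by (simp_all add: snoc_in_tree_vertices_iff)
  with x x_eq show "x \<in> (\<lambda>(y, a). y @ [a]) ` (SIGMA y:tree_sphere q n. {..<num_children q y})"
    unfolding tree_sphere_def by (intro image_eqI[of _ _ "(butlast x, last x)"]) auto
qed (auto simp: tree_sphere_def snoc_in_tree_vertices_iff)

lemma sum_tree_sphere_Suc:
  "(\<Sum>x\<in>tree_sphere q (Suc n). f x) = (\<Sum>y\<in>tree_sphere q n. \<Sum>a<num_children q y. f (y @ [a]))"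
proof -
  have inj: "inj_on (\<lambda>(y, a). y @ [a]) A" for A :: "(nat list \<times> nat) set"
    by (auto simp: inj_on_def)
  have "(\<Sum>x\<in>tree_sphere q (Suc n). f x) =
      (\<Sum>(y, a)\<in>(SIGMA y:tree_sphere q n. {..<num_children q y}). f (y @ [a]))"
    unfolding tree_sphere_Suc sum.reindex[OF inj] by (simp add: case_prod_beta')
  also have "\<dots> = (\<Sum>y\<in>tree_sphere q n. \<Sum>a<num_children q y. f (y @ [a]))"
    by (rule sum.Sigma[symmetric]) (auto simp: finite_tree_sphere)
  finally show ?thesis .
qed

lemma num_children_sphere:
  "y \<in> tree_sphere q n \<Longrightarrow> num_children q y = (if n = 0 then q + 1 else q)"
  unfolding tree_sphere_def num_children_def by auto

lemma card_tree_sphere_le: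
  assumes "q \<ge> 1"
  shows "real (card (tree_sphere q n)) \<le> (real q + 1) * real q ^ n"
proof (induction n)
  case 0
  then show ?case by (simp add: tree_sphere_0)
next
  case (Suc n)
  have "card (tree_sphere q (Suc n)) = (\<Sum>y\<in>tree_sphere q n. num_children q y)"
    using sum_tree_sphere_Suc[where f = "\<lambda>_. 1::nat"] by simp
  also have "\<dots> = card (tree_sphere q n) * (if n = 0 then q + 1 else q)"
    by (simp add: num_children_sphere)
  finally have "real (card (tree_sphere q (Suc n))) =
      real (card (tree_sphere q n)) * (if n = 0 then real q + 1 else real q)"
    by simp
  then show ?case
    using assms mult_right_mono[OF Suc.IH, of "real q"] mult_left_mono[of 1 "real q" "real q + 1"]
    by (auto simp: tree_sphere_0)
qed

definition sphere_sum :: "nat \<Rightarrow> (nat list \<Rightarrow> complex) \<Rightarrow> nat \<Rightarrow> complex" where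
  "sphere_sum q f n = (\<Sum>x\<in>tree_sphere q n. f x)"

lemma sphere_sum_add: "sphere_sum q (\<lambda>x. f x + g x) n = sphere_sum q f n + sphere_sum q g n"
  unfolding sphere_sum_def by (simp add: sum.distrib)

lemma sphere_sum_scale: "sphere_sum q (\<lambda>x. c * f x) n = c * sphere_sum q f n"
  unfolding sphere_sum_def by (simp add: sum_distrib_left)

lemma sum_sphere_neighbors:
  "(\<Sum>x\<in>tree_sphere q n. \<Sum>y\<in>tree_neighbors q x. f y) =
     (if n = 0 then 0 else of_nat (if n = 1 then q + 1 else q) * sphere_sum q f (n - 1))
     + sphere_sum q f (Suc n)"
proof -
  have parents: "(\<Sum>x\<in>tree_sphere q n. if x = [] then 0 else f (butlast x)) =
     (if n = 0 then 0 else of_nat (if n = 1 then q + 1 else q) * sphere_sum q f (n - 1))"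
  proof (cases n)
    case (Suc k)
    have "(\<Sum>x\<in>tree_sphere q (Suc k). if x = [] then 0 else f (butlast x))
        = (\<Sum>y\<in>tree_sphere q k. of_nat (if k = 0 then q + 1 else q) * f y)"
      by (simp add: sum_tree_sphere_Suc num_children_sphere)
    then show ?thesis
      using Suc by (simp add: sphere_sum_def sum_distrib_left)
  qed (simp add: tree_sphere_0)
  have "(\<Sum>x\<in>tree_sphere q n. \<Sum>y\<in>tree_neighbors q x. f y) =
     (\<Sum>x\<in>tree_sphere q n. if x = [] then 0 else f (butlast x))
     + (\<Sum>x\<in>tree_sphere q n. \<Sum>a<num_children q x. f (x @ [a]))"
    by (simp add: sum_tree_neighbors tree_sphere_def sum.distrib)
  then show ?thesis
    unfolding parents by (simp add: sphere_sum_def sum_tree_sphere_Suc)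
qed

lemma sphere_sum_lap:
  "sphere_sum q (lap q f) n = sphere_sum q f n - (1 / (of_nat q + 1)) *
     ((if n = 0 then 0 else of_nat (if n = 1 then q + 1 else q) * sphere_sum q f (n - 1))
      + sphere_sum q f (Suc n))"
proof -
  have "sphere_sum q (lap q f) n =
      (\<Sum>x\<in>tree_sphere q n. f x - 1 / (of_nat q + 1) * (\<Sum>y\<in>tree_neighbors q x. f y))"
    unfolding sphere_sum_def lap_def by (intro sum.cong refl) (simp add: tree_sphere_def)
  also have "\<dots> = sphere_sum q f n
      - 1 / (of_nat q + 1) * (\<Sum>x\<in>tree_sphere q n. \<Sum>y\<in>tree_neighbors q x. f y)"
    unfolding sphere_sum_def by (simp add: sum_subtractf sum_distrib_left)
  finally show ?thesis
    unfolding sum_sphere_neighbors .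
qed

section \<open>Envelopes and the space \<open>S\<^sub>p\<close>\<close>

locale Lp_tree =
  fixes q :: nat and p :: real
  assumes q_ge_2: "q \<ge> 2" and p_gt_1: "1 < p" and p_lt_2: "p < 2"
begin

abbreviation V where "V \<equiv> tree_vertices q"
abbreviation Q where "Q \<equiv> real q"

text \<open>The endpoints of the real part of the \<open>L\<^sup>p\<close>-spectrum of the Laplacian are
  \<open>1 - kappa = \<gamma>(i\<delta>\<^sub>p\<^sub>')\<close> and \<open>gamma_max = 1 + kappa = \<gamma>(\<tau>/2 + i\<delta>\<^sub>p\<^sub>')\<close>.\<close>

definition kappa :: real where
  "kappa = (Q powr (1/p) + Q powr (1 - 1/p)) / (Q + 1)"

definition gamma_max :: real where
  "gamma_max = 1 + kappa"

definition base_decay :: "nat list \<Rightarrow> real" where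
  "base_decay x = Q powr (- real (length x) / p)"

lemma Q_gt_1: "Q > 1"
  using q_ge_2 by simp

lemma p_pos: "p > 0"
  using p_gt_1 by simp

lemma kappa_pos: "kappa > 0"
  unfolding kappa_def using Q_gt_1 by (simp add: add_pos_pos)

lemma gamma_max_gt_1: "gamma_max > 1"
  unfolding gamma_max_def using kappa_pos by simp

lemma base_decay_pos: "base_decay x > 0"
  unfolding base_decay_def using Q_gt_1 by simp

lemma base_decay_snoc: "base_decay (x @ [a]) = Q powr (-1/p) * base_decay x"
  unfolding base_decay_def
  by (subst powr_add[symmetric]) (simp add: diff_divide_distrib add_divide_distrib)

lemma base_decay_butlast: "x \<noteq> [] \<Longrightarrow> base_decay (butlast x) = Q powr (1/p) * base_decay x"
  unfolding base_decay_def
  by (subst powr_add[symmetric]) (simp add: of_nat_diff diff_divide_distrib Suc_le_eq)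

lemma Q_mult_Q_powr_neg_inv_p: "Q * Q powr (-1/p) = Q powr (1 - 1/p)"
proof -
  have "Q powr (1 - 1/p) = Q powr 1 * Q powr (-1/p)"
    by (subst powr_add[symmetric]) simp
  then show ?thesis
    using Q_gt_1 by simp
qed

lemma neighbor_mean_base_decay_le:
  assumes "x \<in> V"
  shows "(\<Sum>y\<in>tree_neighbors q x. base_decay y) / (Q + 1) \<le> kappa * base_decay x"
proof -
  have "(\<Sum>y\<in>tree_neighbors q x. base_decay y) =
      ((if x = [] then 0 else Q powr (1/p)) + real (num_children q x) * Q powr (-1/p)) * base_decay x"
    using sum_tree_neighbors[OF assms, of base_decay]
    by (simp add: base_decay_snoc base_decay_butlast algebra_simps)
  also have "\<dots> \<le> (Q powr (1/p) + Q powr (1 - 1/p)) * base_decay x"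
  proof (rule mult_right_mono)
    have "Q powr (-1/p) \<le> Q powr (1/p)"
      using Q_gt_1 p_pos by simp
    then show "(if x = [] then 0 else Q powr (1/p)) + real (num_children q x) * Q powr (-1/p)
        \<le> Q powr (1/p) + Q powr (1 - 1/p)"
      using Q_mult_Q_powr_neg_inv_p by (simp add: num_children_def algebra_simps)
  qed (use base_decay_pos in \<open>simp add: less_imp_le\<close>)
  finally show ?thesis
    unfolding kappa_def using Q_gt_1 by (auto dest: divide_right_mono[of _ _ "Q + 1"])
qed

definition envelope :: "nat \<Rightarrow> nat \<Rightarrow> nat list \<Rightarrow> real" where
  "envelope m D x = base_decay x / (1 + real (length x - D)) ^ m"

definition dominated :: "nat \<Rightarrow> real \<Rightarrow> nat \<Rightarrow> (nat list \<Rightarrow> complex) \<Rightarrow> bool" where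
  "dominated m C D h \<longleftrightarrow> (\<forall>x. cmod (h x) \<le> C * envelope m D x)"

definition tree_functions :: "(nat list \<Rightarrow> complex) set" where
  "tree_functions = {h. \<forall>x. x \<notin> V \<longrightarrow> h x = 0}"

text \<open>The operator \<open>R\<close> with \<open>lap = I + kappa R\<close>. It maps \<open>envelope m D\<close> into
  \<open>envelope m (D + 1)\<close> with the same constant, because \<open>kappa\<close> is exactly the factor by which
  the neighbour mean multiplies \<open>base_decay\<close>.\<close>

definition shift_op :: "(nat list \<Rightarrow> complex) \<Rightarrow> nat list \<Rightarrow> complex" where
  "shift_op h x = (if x \<in> V then - of_real (1 / (kappa * (Q + 1))) * (\<Sum>y\<in>tree_neighbors q x. h y) else 0)"

lemma envelope_pos: "envelope m D x > 0"
  unfolding envelope_def using base_decay_pos by simp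

lemma envelope_mono: "D \<le> D' \<Longrightarrow> envelope m D x \<le> envelope m D' x"
  unfolding envelope_def using base_decay_pos[of x]
  by (intro divide_left_mono mult_pos_pos power_mono) auto

lemma dominated_nonneg_const: "dominated m C D h \<Longrightarrow> C \<ge> 0"
  unfolding dominated_def
  by (metis envelope_pos norm_ge_zero order_trans zero_le_mult_iff not_less)

lemma envelope_neighbor_le:
  assumes "x \<in> V" "y \<in> tree_neighbors q x"
  shows "envelope m D y \<le> base_decay y / (1 + real (length x - Suc D)) ^ m"
proof -
  have "length x - Suc D \<le> length y - D"
    using length_le_Suc_length_neighbor[OF assms] by simp
  then have "(1 + real (length x - Suc D)) ^ m \<le> (1 + real (length y - D)) ^ m"
    by (intro power_mono) auto
  then show ?thesis
    unfolding envelope_def using base_decay_pos[of y] by (intro divide_left_mono) auto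
qed

lemma dominated_shift_op:
  assumes "dominated m C D h"
  shows "dominated m C (Suc D) (shift_op h)"
  unfolding dominated_def
proof
  fix x
  have C: "C \<ge> 0"
    using dominated_nonneg_const[OF assms] .
  show "cmod (shift_op h x) \<le> C * envelope m (Suc D) x"
  proof (cases "x \<in> V")
    case False
    then show ?thesis
      using envelope_pos[of m "Suc D" x] C by (simp add: shift_op_def)
  next
    case True
    define E where "E = (1 + real (length x - Suc D)) ^ m"
    have E: "E > 0"
      unfolding E_def by simp
    have c: "1 / (kappa * (Q + 1)) > 0"
      using kappa_pos Q_gt_1 by simp
    have "shift_op h x = - (of_real (1 / (kappa * (Q + 1))) * (\<Sum>y\<in>tree_neighbors q x. h y))"
      unfolding shift_op_def using True by (simp only: if_True mult_minus_left)
    then have "cmod (shift_op h x) = 1 / (kappa * (Q + 1)) * cmod (\<Sum>y\<in>tree_neighbors q x. h y)"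
      by (simp only: norm_minus_cancel norm_mult norm_of_real abs_of_pos[OF c])
    also have "\<dots> \<le> 1 / (kappa * (Q + 1)) * (\<Sum>y\<in>tree_neighbors q x. C * (base_decay y / E))"
    proof (intro mult_left_mono order.trans[OF norm_sum] sum_mono)
      fix y assume "y \<in> tree_neighbors q x"
      then show "cmod (h y) \<le> C * (base_decay y / E)"
        using assms C envelope_neighbor_le[OF True, of y m D] unfolding dominated_def E_def
        by (meson mult_left_mono order_trans)
    qed (use c in auto)
    also have "\<dots> = C / E * ((\<Sum>y\<in>tree_neighbors q x. base_decay y) / (Q + 1)) / kappa"
    proof -
      have "(\<Sum>y\<in>tree_neighbors q x. C * (base_decay y / E)) =
          C / E * (\<Sum>y\<in>tree_neighbors q x. base_decay y)"
        by (simp add: sum_distrib_left)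
      then show ?thesis
        by simp
    qed
    also have "\<dots> \<le> C / E * (kappa * base_decay x) / kappa"
      using neighbor_mean_base_decay_le[OF True] C E kappa_pos
      by (intro divide_right_mono mult_left_mono) auto
    also have "\<dots> = C * envelope m (Suc D) x"
      unfolding envelope_def E_def using kappa_pos by simp
    finally show ?thesis .
  qed
qed

lemma dominated_shift_op_power:
  "dominated m C D h \<Longrightarrow> dominated m C (D + i) ((shift_op ^^ i) h)"
  by (induction i) (simp_all add: dominated_shift_op)

lemma dominated_lincomb:
  assumes "dominated m C1 D f" "dominated m C2 D g"
  shows "dominated m (cmod a * C1 + cmod c * C2) D (\<lambda>x. a * f x + c * g x)"
  unfolding dominated_def
proof
  fix x
  have "cmod (a * f x + c * g x) \<le> cmod a * cmod (f x) + cmod c * cmod (g x)"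
    by (metis norm_mult norm_triangle_ineq)
  also have "\<dots> \<le> cmod a * (C1 * envelope m D x) + cmod c * (C2 * envelope m D x)"
    using assms unfolding dominated_def by (intro add_mono mult_left_mono) auto
  finally show "cmod (a * f x + c * g x) \<le> (cmod a * C1 + cmod c * C2) * envelope m D x"
    by (simp add: algebra_simps)
qed

lemma shift_op_in_tree_functions: "shift_op h \<in> tree_functions"
  unfolding tree_functions_def shift_op_def by simp

lemma shift_op_sum:
  "finite I \<Longrightarrow> shift_op (\<lambda>x. \<Sum>i\<in>I. a i * f i x) = (\<lambda>x. \<Sum>i\<in>I. a i * shift_op (f i) x)"
  unfolding shift_op_def by (auto simp: sum_distrib_left sum.swap[of _ I] mult.left_commute)

definition shift_poly :: "nat \<Rightarrow> (nat \<Rightarrow> real) \<Rightarrow> (nat list \<Rightarrow> complex) \<Rightarrow> nat list \<Rightarrow> complex" where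
  "shift_poly N c h = (\<lambda>x. \<Sum>i\<le>N. of_real (c i) * (shift_op ^^ i) h x)"

lemma shift_poly_in_tree_functions: "h \<in> tree_functions \<Longrightarrow> shift_poly N c h \<in> tree_functions"
proof -
  assume h: "h \<in> tree_functions"
  have "(shift_op ^^ i) h \<in> tree_functions" for i
    using h by (cases i) (simp_all add: shift_op_in_tree_functions)
  then show ?thesis
    unfolding shift_poly_def tree_functions_def by (auto intro!: sum.neutral)
qed

lemma shift_poly_Suc_eq:
  "(\<And>i. i > N \<Longrightarrow> c i = 0) \<Longrightarrow> shift_poly (Suc N) c h = shift_poly N c h"
  unfolding shift_poly_def by simp

lemma dominated_shift_poly:
  assumes "dominated m C D h"
  shows "dominated m ((\<Sum>i\<le>N. \<bar>c i\<bar>) * C) (D + N) (shift_poly N c h)"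
  unfolding dominated_def
proof
  fix x
  have C: "C \<ge> 0"
    using dominated_nonneg_const[OF assms] .
  have "cmod (shift_poly N c h x) \<le> (\<Sum>i\<le>N. cmod (of_real (c i) * (shift_op ^^ i) h x))"
    unfolding shift_poly_def by (rule norm_sum)
  also have "\<dots> \<le> (\<Sum>i\<le>N. \<bar>c i\<bar> * (C * envelope m (D + N) x))"
  proof (rule sum_mono)
    fix i assume i: "i \<in> {..N}"
    have "cmod ((shift_op ^^ i) h x) \<le> C * envelope m (D + i) x"
      using dominated_shift_op_power[OF assms, of i] unfolding dominated_def by blast
    also have "\<dots> \<le> C * envelope m (D + N) x"
      using i C envelope_mono[of "D + i" "D + N" m x] by (intro mult_left_mono) auto
    finally show "cmod (of_real (c i) * (shift_op ^^ i) h x) \<le> \<bar>c i\<bar> * (C * envelope m (D + N) x)"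
      by (simp add: norm_mult mult_left_mono)
  qed
  also have "\<dots> = (\<Sum>i\<le>N. \<bar>c i\<bar>) * C * envelope m (D + N) x"
    by (simp add: sum_distrib_right mult.assoc)
  finally show "cmod (shift_poly N c h x) \<le> (\<Sum>i\<le>N. \<bar>c i\<bar>) * C * envelope m (D + N) x" .
qed

lemma weight_mult_base_decay: "weight q p m x * base_decay x = (1 + real (length x)) ^ m"
proof -
  have "Q powr (real (length x) / p) * Q powr (- real (length x) / p) = 1"
    using Q_gt_1 by (subst powr_add[symmetric]) simp
  then show ?thesis
    unfolding weight_def base_decay_def tree_norm_eq_length by simp
qed

lemma weight_pos: "weight q p m x > 0"
  unfolding weight_def using Q_gt_1 by simp

lemma weight_mult_envelope_le: "weight q p m x * envelope m D x \<le> (1 + real D) ^ m"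
proof -
  have le: "1 + real (length x) \<le> (1 + real D) * (1 + real (length x - D))"
  proof (cases "length x \<ge> D")
    case True
    then obtain k where "length x = D + k"
      using le_Suc_ex by blast
    then show ?thesis
      by (simp add: algebra_simps)
  qed simp
  have "weight q p m x * envelope m D x = ((1 + real (length x)) / (1 + real (length x - D))) ^ m"
    unfolding envelope_def using weight_mult_base_decay[of m x]
    by (simp add: mult.assoc[symmetric] power_divide)
  also have "\<dots> \<le> (1 + real D) ^ m"
    using le by (intro power_mono) (auto simp: divide_simps mult.commute)
  finally show ?thesis .
qed

lemma weight_mult_envelope_0: "weight q p m x * envelope m 0 x = 1"
  unfolding envelope_def using weight_mult_base_decay[of m x] by (simp add: mult.assoc[symmetric])

lemma weight_mult_norm_le_of_dominated:
  "dominated m C D h \<Longrightarrow> weight q p m x * cmod (h x) \<le> (1 + real D) ^ m * C"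
proof -
  assume h: "dominated m C D h"
  have "weight q p m x * cmod (h x) \<le> C * (weight q p m x * envelope m D x)"
    using h weight_pos[of m x] unfolding dominated_def
    by (metis mult.left_commute mult_left_mono less_imp_le)
  also have "\<dots> \<le> C * (1 + real D) ^ m"
    using weight_mult_envelope_le dominated_nonneg_const[OF h] by (intro mult_left_mono) auto
  finally show ?thesis
    by (simp add: mult.commute)
qed

lemma nu_le_of_dominated: "dominated m C D h \<Longrightarrow> nu q p m h \<le> (1 + real D) ^ m * C"
  unfolding nu_def using Nil_in_tree_vertices
  by (intro cSUP_least weight_mult_norm_le_of_dominated) auto

lemma Sp_subset_tree_functions: "Sp q p \<subseteq> tree_functions"
  unfolding Sp_def tree_functions_def by auto

lemma weight_mult_norm_le_nu:
  "f \<in> Sp q p \<Longrightarrow> x \<in> V \<Longrightarrow> weight q p m x * cmod (f x) \<le> nu q p m f"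
  unfolding nu_def Sp_def by (intro cSUP_upper) auto

lemma nu_nonneg: "f \<in> Sp q p \<Longrightarrow> nu q p m f \<ge> 0"
  using weight_mult_norm_le_nu[OF _ Nil_in_tree_vertices, of f m] weight_pos[of m "[]"]
  by (meson mult_nonneg_nonneg norm_ge_zero order_trans less_imp_le)

lemma dominated_nu: assumes "f \<in> Sp q p" shows "dominated m (nu q p m f) 0 f"
  unfolding dominated_def
proof
  fix x
  show "cmod (f x) \<le> nu q p m f * envelope m 0 x"
  proof (cases "x \<in> V")
    case False
    then show ?thesis
      using assms nu_nonneg[OF assms] envelope_pos[of m 0 x] unfolding Sp_def by simp
  next
    case True
    have "cmod (f x) = (weight q p m x * cmod (f x)) * envelope m 0 x"
      using weight_mult_envelope_0[of m x] by (simp add: algebra_simps)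
    also have "\<dots> \<le> nu q p m f * envelope m 0 x"
      using weight_mult_norm_le_nu[OF assms True] envelope_pos[of m 0 x]
      by (intro mult_right_mono) auto
    finally show ?thesis .
  qed
qed

lemma Sp_of_dominated:
  assumes "h \<in> tree_functions" "\<And>m. \<exists>C D. dominated m C D h"
  shows "h \<in> Sp q p"
  unfolding Sp_def
proof (intro CollectI conjI allI impI)
  fix x assume "x \<notin> V"
  then show "h x = 0"
    using assms(1) unfolding tree_functions_def by auto
next
  fix m
  obtain C D where "dominated m C D h"
    using assms(2) by blast
  then show "bdd_above ((\<lambda>x. weight q p m x * cmod (h x)) ` V)"
    by (intro bdd_aboveI2[where M = "(1 + real D) ^ m * C"] weight_mult_norm_le_of_dominated)
qed

lemma Sp_lincomb:
  assumes "f \<in> Sp q p" "g \<in> Sp q p"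
  shows "(\<lambda>x. a * f x + c * g x) \<in> Sp q p"
proof (rule Sp_of_dominated)
  show "(\<lambda>x. a * f x + c * g x) \<in> tree_functions"
    using assms unfolding Sp_def tree_functions_def by simp
  show "\<exists>C D. dominated m C D (\<lambda>x. a * f x + c * g x)" for m
    using dominated_lincomb[OF dominated_nu[OF assms(1)] dominated_nu[OF assms(2)]] by blast
qed

lemma Sp_scale: "f \<in> Sp q p \<Longrightarrow> (\<lambda>x. a * f x) \<in> Sp q p"
  using Sp_lincomb[of f f a 0] by simp

lemma Sp_diff: "f \<in> Sp q p \<Longrightarrow> g \<in> Sp q p \<Longrightarrow> (\<lambda>x. f x - g x) \<in> Sp q p"
  using Sp_lincomb[of f g 1 "-1"] by simp

lemma shift_op_Sp: "f \<in> Sp q p \<Longrightarrow> shift_op f \<in> Sp q p"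
  using dominated_shift_op[OF dominated_nu] shift_op_in_tree_functions
  by (intro Sp_of_dominated) blast+

section \<open>Binomial expansion of the normalised Laplacian\<close>

definition coef_id :: real where
  "coef_id = 1 / gamma_max"

definition coef_shift :: real where
  "coef_shift = kappa / gamma_max"

lemma coef_id_eq: "coef_id = 1 - coef_shift"
  unfolding coef_id_def coef_shift_def gamma_max_def using kappa_pos by (simp add: field_simps)

lemma coef_id_pos: "coef_id > 0"
  unfolding coef_id_def using gamma_max_gt_1 by simp

lemma coef_shift_pos: "coef_shift > 0"
  unfolding coef_shift_def using gamma_max_gt_1 kappa_pos by simp

definition nlap :: "(nat list \<Rightarrow> complex) \<Rightarrow> nat list \<Rightarrow> complex" where
  "nlap h = (\<lambda>x. lap q h x / of_real gamma_max)"

lemma lap_eq_nlap: "lap q h = (\<lambda>x. of_real gamma_max * nlap h x)"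
  unfolding nlap_def using gamma_max_gt_1 by auto

lemma nlap_eq_shift_op:
  assumes "h \<in> tree_functions"
  shows "nlap h = (\<lambda>x. of_real coef_id * h x + of_real coef_shift * shift_op h x)"
proof
  fix x
  show "nlap h x = of_real coef_id * h x + of_real coef_shift * shift_op h x"
  proof (cases "x \<in> V")
    case False
    then show ?thesis
      using assms unfolding nlap_def lap_def shift_op_def tree_functions_def by auto
  next
    case True
    have nonzero: "complex_of_real gamma_max \<noteq> 0" "complex_of_real kappa \<noteq> 0"
      "complex_of_nat q + 1 \<noteq> 0"
      using gamma_max_gt_1 kappa_pos of_nat_neq_0[of q, where 'a=complex]
      by (auto simp: add.commute)
    have split: "(a - 1/k * S) / c = 1/c * a + g/c * (-(1/(g*k)) * S)"
      if "c \<noteq> 0" "g \<noteq> 0" "k \<noteq> 0" for c g k a S :: complex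
      using that by (simp add: field_simps)
    show ?thesis
      unfolding nlap_def lap_def shift_op_def coef_id_def coef_shift_def
      using True split[OF nonzero] by simp
  qed
qed

lemma nlap_Sp: "f \<in> Sp q p \<Longrightarrow> nlap f \<in> Sp q p"
  using Sp_lincomb[OF _ shift_op_Sp] nlap_eq_shift_op Sp_subset_tree_functions by auto

lemma nlap_power_Sp: "f \<in> Sp q p \<Longrightarrow> (nlap ^^ n) f \<in> Sp q p"
  by (induction n) (auto simp: nlap_Sp)

lemma nlap_in_tree_functions: "nlap h \<in> tree_functions"
  unfolding nlap_def tree_functions_def lap_def by simp

lemma nlap_diff: "nlap (\<lambda>x. f x - g x) = (\<lambda>x. nlap f x - nlap g x)"
  unfolding nlap_def lap_def
  by (auto simp: sum_subtractf diff_divide_distrib right_diff_distrib)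

lemma nlap_add: "nlap (\<lambda>x. f x + g x) = (\<lambda>x. nlap f x + nlap g x)"
proof
  fix x
  show "nlap (\<lambda>x. f x + g x) x = nlap f x + nlap g x"
    unfolding nlap_def lap_def
    by (cases "x \<in> V") (simp_all add: sum.distrib add_divide_distrib diff_divide_distrib distrib_left)
qed

lemma nlap_power_diff: "(nlap ^^ n) (\<lambda>x. f x - g x) = (\<lambda>x. (nlap ^^ n) f x - (nlap ^^ n) g x)"
  by (induction n) (simp_all add: nlap_diff)

text \<open>As \<open>nlap = coef_id I + coef_shift R\<close> is a convex combination, \<open>nlap\<^sup>n\<close> averages
  \<open>R\<^sup>0, \<dots>, R\<^sup>n\<close> with binomial weights.\<close>

definition binom_weight :: "nat \<Rightarrow> nat \<Rightarrow> real" where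
  "binom_weight n i = real (n choose i) * coef_shift ^ i * coef_id ^ (n - i)"

lemma binom_weight_eq_0: "n < i \<Longrightarrow> binom_weight n i = 0"
  unfolding binom_weight_def by simp

lemma binom_weight_nonneg: "binom_weight n i \<ge> 0"
  unfolding binom_weight_def using coef_shift_pos coef_id_pos by simp

lemma binom_weight_Suc:
  "binom_weight (Suc n) i =
     coef_id * binom_weight n i + coef_shift * (if i = 0 then 0 else binom_weight n (i - 1))"
proof (cases i)
  case (Suc j)
  then show ?thesis
  proof (cases "j < n")
    case True
    then have "n - j = Suc (n - Suc j)"
      by simp
    then have "coef_id ^ (n - j) = coef_id * coef_id ^ (n - Suc j)"
      by simp
    then show ?thesis
      unfolding binom_weight_def Suc by (simp add: algebra_simps)
  qed (simp add: binom_weight_def algebra_simps)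
qed (simp add: binom_weight_def)

lemma sum_binom_weight_Suc:
  fixes F :: "nat \<Rightarrow> 'a :: {real_algebra_1, comm_ring_1}"
  shows "(\<Sum>i\<le>Suc n. of_real (binom_weight (Suc n) i) * F i) =
    (\<Sum>i\<le>n. of_real (binom_weight n i) * (of_real coef_id * F i + of_real coef_shift * F (Suc i)))"
proof -
  have "(\<Sum>i\<le>Suc n. of_real (binom_weight (Suc n) i) * F i) =
      (\<Sum>i\<le>Suc n. of_real coef_id * of_real (binom_weight n i) * F i) +
      (\<Sum>i\<le>Suc n. of_real coef_shift * of_real (if i = 0 then 0 else binom_weight n (i - 1)) * F i)"
    unfolding binom_weight_Suc by (simp add: sum.distrib algebra_simps)
  also have "(\<Sum>i\<le>Suc n. of_real coef_id * of_real (binom_weight n i) * F i) =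
      (\<Sum>i\<le>n. of_real coef_id * of_real (binom_weight n i) * F i)"
    by (simp add: binom_weight_eq_0)
  also have "(\<Sum>i\<le>Suc n. of_real coef_shift * of_real (if i = 0 then 0 else binom_weight n (i - 1)) * F i) =
      (\<Sum>i\<le>n. of_real coef_shift * of_real (binom_weight n i) * F (Suc i))"
    by (subst sum.atMost_Suc_shift) simp
  finally show ?thesis
    by (simp add: sum.distrib algebra_simps)
qed

lemma sum_binom_weight_Suc_real:
  "(\<Sum>i\<le>Suc n. binom_weight (Suc n) i * f i) =
    (\<Sum>i\<le>n. binom_weight n i * (coef_id * f i + coef_shift * f (Suc i)))"
  using sum_binom_weight_Suc[where F = f] by simp

lemma sum_binom_weight: "(\<Sum>i\<le>n. binom_weight n i) = 1"
proof -
  have "(coef_shift + coef_id) ^ n = (\<Sum>i\<le>n. binom_weight n i)"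
    unfolding binomial_ring binom_weight_def by simp
  then show ?thesis
    using coef_id_eq by simp
qed

lemma binom_weight_mean: "(\<Sum>i\<le>n. binom_weight n i * real i) = real n * coef_shift"
proof (induction n)
  case (Suc n)
  have "(\<Sum>i\<le>Suc n. binom_weight (Suc n) i * real i) =
      (\<Sum>i\<le>n. binom_weight n i * real i + coef_shift * binom_weight n i)"
    unfolding sum_binom_weight_Suc_real by (rule sum.cong) (simp_all add: coef_id_eq algebra_simps)
  also have "\<dots> = (\<Sum>i\<le>n. binom_weight n i * real i) + coef_shift * (\<Sum>i\<le>n. binom_weight n i)"
    by (simp add: sum.distrib sum_distrib_left)
  finally show ?case
    using Suc sum_binom_weight by (simp add: algebra_simps)
qed (simp add: binom_weight_def)

lemma binom_weight_second_moment:
  "(\<Sum>i\<le>n. binom_weight n i * real i ^ 2) = real n * coef_shift * coef_id + (real n * coef_shift) ^ 2"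
proof (induction n)
  case (Suc n)
  have "(\<Sum>i\<le>Suc n. binom_weight (Suc n) i * real i ^ 2) =
      (\<Sum>i\<le>n. binom_weight n i * real i ^ 2 + 2 * coef_shift * (binom_weight n i * real i)
        + coef_shift * binom_weight n i)"
    unfolding sum_binom_weight_Suc_real
    by (rule sum.cong) (simp_all add: coef_id_eq algebra_simps power2_eq_square)
  also have "\<dots> = (\<Sum>i\<le>n. binom_weight n i * real i ^ 2)
      + 2 * coef_shift * (\<Sum>i\<le>n. binom_weight n i * real i) + coef_shift * (\<Sum>i\<le>n. binom_weight n i)"
    by (simp add: sum.distrib sum_distrib_left)
  finally show ?case
    using Suc sum_binom_weight binom_weight_mean
    by (simp add: coef_id_eq algebra_simps power2_eq_square)
qed (simp add: binom_weight_def)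

lemma binom_weight_variance:
  "(\<Sum>i\<le>n. binom_weight n i * (real i - real n * coef_shift) ^ 2) = real n * coef_shift * coef_id"
proof -
  have "(\<Sum>i\<le>n. binom_weight n i * (real i - real n * coef_shift) ^ 2) =
      (\<Sum>i\<le>n. binom_weight n i * real i ^ 2) - 2 * (real n * coef_shift) * (\<Sum>i\<le>n. binom_weight n i * real i)
      + (real n * coef_shift) ^ 2 * (\<Sum>i\<le>n. binom_weight n i)"
    by (simp add: sum.distrib sum_subtractf sum_distrib_left algebra_simps power2_eq_square)
  then show ?thesis
    using sum_binom_weight binom_weight_mean binom_weight_second_moment by (simp add: power2_eq_square)
qed

lemma binom_weight_Suc_ratio:
  "real (Suc n) * coef_id * binom_weight n i = real (Suc n - i) * binom_weight (Suc n) i"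
proof (cases "i \<le> n")
  case True
  have "real (Suc n - i) * real (Suc n choose i) = real (Suc n) * real (n choose i)"
    using binomial_absorb_comp[of "Suc n" i] by (metis diff_Suc_1 of_nat_mult)
  moreover have "coef_id ^ (Suc n - i) = coef_id * coef_id ^ (n - i)"
    using True by (simp add: Suc_diff_le)
  ultimately show ?thesis
    unfolding binom_weight_def by (metis (no_types, lifting) mult.assoc mult.left_commute)
next
  case False
  then show ?thesis
    unfolding binom_weight_def by (cases "i = Suc n") auto
qed

definition binom_weight_diff :: "nat \<Rightarrow> nat \<Rightarrow> real" where
  "binom_weight_diff n i = binom_weight (Suc n) i - binom_weight n i"

lemma binom_weight_diff_eq:
  "binom_weight_diff n i =
     binom_weight (Suc n) i * (real i - real (Suc n) * coef_shift) / (real (Suc n) * coef_id)"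
proof -
  have "real (Suc n) * coef_id * binom_weight_diff n i =
      real (Suc n) * coef_id * binom_weight (Suc n) i - real (Suc n - i) * binom_weight (Suc n) i"
    unfolding binom_weight_diff_def using binom_weight_Suc_ratio[of n i] by (simp add: algebra_simps)
  also have "\<dots> = binom_weight (Suc n) i * (real i - real (Suc n) * coef_shift)"
    by (cases "i \<le> Suc n") (simp_all add: binom_weight_eq_0 coef_id_eq of_nat_diff algebra_simps)
  finally have "real (Suc n) * coef_id * binom_weight_diff n i =
      binom_weight (Suc n) i * (real i - real (Suc n) * coef_shift)" .
  moreover have "real (Suc n) * coef_id \<noteq> 0"
    using coef_id_pos by simp
  ultimately show ?thesis
    by (metis nonzero_mult_div_cancel_left)
qed

definition binom_weight_diff_l1 :: "nat \<Rightarrow> real" where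
  "binom_weight_diff_l1 n = (\<Sum>i\<le>Suc n. \<bar>binom_weight_diff n i\<bar>)"

text \<open>The decay \<open>O(n\<^sup>-\<^sup>1\<^sup>/\<^sup>2)\<close> of \<open>\<parallel>nlap\<^sup>n\<^sup>+\<^sup>1 - nlap\<^sup>n\<parallel>\<close>: by the previous identity the
  \<open>\<ell>\<^sup>1\<close>-norm is a mean absolute deviation, bounded via AM-GM by the standard deviation.\<close>

lemma binom_weight_diff_l1_sq_le:
  "binom_weight_diff_l1 n ^ 2 \<le> coef_shift / (real (Suc n) * coef_id)"
proof -
  define N where "N = Suc n"
  define a where "a = sqrt (real N * coef_shift * coef_id)"
  have a_pos: "a > 0"
    unfolding a_def N_def using coef_shift_pos coef_id_pos by simp
  have a_sq: "a ^ 2 = real N * coef_shift * coef_id"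
    unfolding a_def using coef_shift_pos coef_id_pos by simp
  have am_gm: "\<bar>t\<bar> \<le> (t ^ 2 / a + a) / 2" for t :: real
  proof -
    have "0 \<le> (\<bar>t\<bar> - a) ^ 2"
      by simp
    then show ?thesis
      using a_pos by (simp add: field_simps power2_eq_square)
  qed
  have "binom_weight_diff_l1 n =
      (\<Sum>i\<le>N. binom_weight N i * \<bar>real i - real N * coef_shift\<bar>) / (real N * coef_id)"
    unfolding binom_weight_diff_l1_def binom_weight_diff_eq N_def sum_divide_distrib
    using binom_weight_nonneg coef_id_pos by (intro sum.cong refl) (simp add: abs_mult)
  also have "(\<Sum>i\<le>N. binom_weight N i * \<bar>real i - real N * coef_shift\<bar>) \<le>
      (\<Sum>i\<le>N. binom_weight N i * (((real i - real N * coef_shift) ^ 2 / a + a) / 2))"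
    by (intro sum_mono mult_left_mono am_gm binom_weight_nonneg)
  also have "\<dots> = ((\<Sum>i\<le>N. binom_weight N i * (real i - real N * coef_shift) ^ 2) / a
      + a * (\<Sum>i\<le>N. binom_weight N i)) / 2"
    by (simp add: sum_distrib_left sum_divide_distrib sum.distrib algebra_simps add_divide_distrib)
  also have "\<dots> = a"
    unfolding binom_weight_variance sum_binom_weight using a_sq a_pos
    by (simp add: power2_eq_square field_simps)
  finally have "binom_weight_diff_l1 n \<le> a / (real N * coef_id)"
    using coef_id_pos by (simp add: divide_right_mono)
  moreover have "binom_weight_diff_l1 n \<ge> 0"
    unfolding binom_weight_diff_l1_def by simp
  ultimately have "binom_weight_diff_l1 n ^ 2 \<le> (a / (real N * coef_id)) ^ 2"
    by (intro power_mono) auto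
  also have "\<dots> = coef_shift / (real N * coef_id)"
    using coef_id_pos unfolding power_divide a_sq N_def by (simp add: power2_eq_square)
  finally show ?thesis
    unfolding N_def .
qed

lemma nlap_power_eq_shift_poly:
  assumes "h \<in> tree_functions"
  shows "(nlap ^^ n) h = shift_poly n (binom_weight n) h"
proof (induction n)
  case 0
  then show ?case
    unfolding shift_poly_def binom_weight_def by simp
next
  case (Suc n)
  have shift: "shift_op (shift_poly n (binom_weight n) h) =
      (\<lambda>x. \<Sum>i\<le>n. of_real (binom_weight n i) * (shift_op ^^ Suc i) h x)"
    unfolding shift_poly_def by (subst shift_op_sum) auto
  have "(nlap ^^ Suc n) h = nlap (shift_poly n (binom_weight n) h)"
    using Suc by simp
  also have "\<dots> = (\<lambda>x. of_real coef_id * shift_poly n (binom_weight n) h x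
      + of_real coef_shift * shift_op (shift_poly n (binom_weight n) h) x)"
    by (rule nlap_eq_shift_op[OF shift_poly_in_tree_functions[OF assms]])
  also have "\<dots> = shift_poly (Suc n) (binom_weight (Suc n)) h"
  proof
    fix x
    show "of_real coef_id * shift_poly n (binom_weight n) h x
        + of_real coef_shift * shift_op (shift_poly n (binom_weight n) h) x
        = shift_poly (Suc n) (binom_weight (Suc n)) h x"
      unfolding shift
      unfolding shift_poly_def sum_binom_weight_Suc[where F = "\<lambda>i. (shift_op ^^ i) h x"]
      by (simp add: sum_distrib_left sum.distrib algebra_simps)
  qed
  finally show ?case .
qed

lemma nu_nlap_power_le:
  assumes "f \<in> Sp q p"
  shows "nu q p m ((nlap ^^ N) f) \<le> (1 + real N) ^ m * nu q p m f"
proof -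
  have "(\<Sum>i\<le>N. \<bar>binom_weight N i\<bar>) = 1"
    using sum_binom_weight[of N] binom_weight_nonneg by simp
  then have "dominated m (nu q p m f) N ((nlap ^^ N) f)"
    using dominated_shift_poly[OF dominated_nu[OF assms], where N = N and c = "binom_weight N"]
      nlap_power_eq_shift_poly assms Sp_subset_tree_functions by auto
  then show ?thesis
    by (rule nu_le_of_dominated)
qed

definition nlap_defect :: "(nat list \<Rightarrow> complex) \<Rightarrow> nat list \<Rightarrow> complex" where
  "nlap_defect f = (\<lambda>x. nlap f x - f x)"

definition smoothed_defect :: "nat \<Rightarrow> (nat list \<Rightarrow> complex) \<Rightarrow> nat list \<Rightarrow> complex" where
  "smoothed_defect n f = (nlap ^^ n) (nlap_defect f)"

lemma nlap_defect_Sp: "f \<in> Sp q p \<Longrightarrow> nlap_defect f \<in> Sp q p"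
  unfolding nlap_defect_def by (intro Sp_diff nlap_Sp)

lemma nlap_defect_power_Sp: "f \<in> Sp q p \<Longrightarrow> (nlap_defect ^^ K) f \<in> Sp q p"
  by (induction K) (auto simp: nlap_defect_Sp)

lemma nlap_defect_nlap: "nlap_defect (nlap f) = nlap (nlap_defect f)"
  unfolding nlap_defect_def nlap_diff ..

lemma nlap_defect_add: "nlap_defect (\<lambda>x. f x + g x) = (\<lambda>x. nlap_defect f x + nlap_defect g x)"
  unfolding nlap_defect_def nlap_add by auto

lemma smoothed_defect_in_tree_functions:
  "h \<in> tree_functions \<Longrightarrow> smoothed_defect n h \<in> tree_functions"
  unfolding smoothed_defect_def nlap_defect_def
  using nlap_in_tree_functions by (cases n) (auto simp: tree_functions_def)

lemma smoothed_defect_eq: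
  assumes "h \<in> tree_functions"
  shows "smoothed_defect n h = shift_poly (Suc n) (binom_weight_diff n) h"
proof -
  have "smoothed_defect n h = (\<lambda>x. (nlap ^^ n) (nlap h) x - (nlap ^^ n) h x)"
    unfolding smoothed_defect_def nlap_defect_def nlap_power_diff ..
  also have "(nlap ^^ n) (nlap h) = (nlap ^^ Suc n) h"
    by (simp add: funpow_Suc_right del: funpow.simps)
  also have "\<dots> = shift_poly (Suc n) (binom_weight (Suc n)) h"
    by (rule nlap_power_eq_shift_poly[OF assms])
  also have "(nlap ^^ n) h = shift_poly (Suc n) (binom_weight n) h"
    using nlap_power_eq_shift_poly[OF assms, of n] shift_poly_Suc_eq[of n "binom_weight n" h]
      binom_weight_eq_0
    by simp
  finally show ?thesis
    unfolding shift_poly_def binom_weight_diff_def by (simp add: sum_subtractf algebra_simps)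
qed

lemma dominated_smoothed_defect_power:
  assumes "h \<in> tree_functions" "dominated m C 0 h"
  shows "dominated m (binom_weight_diff_l1 n ^ K * C) (K * Suc n) ((smoothed_defect n ^^ K) h)"
proof (induction K)
  case (Suc K)
  have "(smoothed_defect n ^^ K) h \<in> tree_functions"
    using assms(1) by (induction K) (auto simp: smoothed_defect_in_tree_functions)
  then show ?case
    using dominated_shift_poly[OF Suc.IH, where N = "Suc n" and c = "binom_weight_diff n"]
    by (simp add: smoothed_defect_eq binom_weight_diff_l1_def algebra_simps)
qed (use assms in simp)

lemma smoothed_defect_power_eq:
  "(smoothed_defect n ^^ K) f = (nlap ^^ (n * K)) ((nlap_defect ^^ K) f)"
proof (induction K)
  case (Suc K)
  have commute: "nlap_defect ((nlap ^^ j) g) = (nlap ^^ j) (nlap_defect g)" for j g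
    by (induction j) (simp_all add: nlap_defect_nlap)
  have "(smoothed_defect n ^^ Suc K) f = (nlap ^^ n) (nlap_defect ((nlap ^^ (n * K)) ((nlap_defect ^^ K) f)))"
    unfolding funpow.simps(2) comp_def Suc.IH smoothed_defect_def ..
  also have "\<dots> = (nlap ^^ (n * Suc K)) ((nlap_defect ^^ Suc K) f)"
    by (simp add: commute funpow_add)
  finally show ?case .
qed simp

lemma nu_smoothed_defect_power_le:
  assumes "f \<in> Sp q p"
  shows "nu q p m ((nlap ^^ (n * K)) ((nlap_defect ^^ K) f)) \<le>
    (1 + real (K * Suc n)) ^ m * (binom_weight_diff_l1 n ^ K * nu q p m f)"
  unfolding smoothed_defect_power_eq[symmetric]
  using assms Sp_subset_tree_functions
  by (blast intro: nu_le_of_dominated dominated_smoothed_defect_power dominated_nu)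

section \<open>Sequences at and above the top of the spectrum\<close>

lemma tempered_add:
  "tempered q p T \<Longrightarrow> f \<in> Sp q p \<Longrightarrow> g \<in> Sp q p \<Longrightarrow> T (\<lambda>x. f x + g x) = T f + T g"
  unfolding tempered_def by blast

lemma tempered_scale:
  "tempered q p T \<Longrightarrow> f \<in> Sp q p \<Longrightarrow> T (\<lambda>x. c * f x) = c * T f"
  unfolding tempered_def by blast

lemma tempered_diff:
  assumes "tempered q p T" "f \<in> Sp q p" "g \<in> Sp q p"
  shows "T (\<lambda>x. f x - g x) = T f - T g"
  using tempered_add[OF assms(1,2) Sp_scale[OF assms(3), of "-1"]]
    tempered_scale[OF assms(1,3), of "-1"]
  by simp

lemma seq_cond_tempered: "seq_cond q p lam T \<Longrightarrow> tempered q p (T k)"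
  unfolding seq_cond_def by blast

lemma seq_cond_uniform_bound:
  assumes "seq_cond q p lam T"
  obtains M m where "M > 0" "\<And>\<phi> k. \<phi> \<in> Sp q p \<Longrightarrow> cmod (T k \<phi>) \<le> M * nu q p m \<phi>"
  using assms unfolding seq_cond_def by blast

lemma seq_cond_nlap:
  assumes T: "seq_cond q p lam T" and "k \<ge> 1" and \<phi>: "\<phi> \<in> Sp q p"
  shows "T k (nlap \<phi>) = lam / of_real gamma_max * T (k - 1) \<phi>"
proof -
  have "T k (lap q \<phi>) = lam * T (k - 1) \<phi>"
    using assms unfolding seq_cond_def by blast
  moreover have "T k (lap q \<phi>) = of_real gamma_max * T k (nlap \<phi>)"
    unfolding lap_eq_nlap by (rule tempered_scale[OF seq_cond_tempered[OF T] nlap_Sp[OF \<phi>]])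
  ultimately show ?thesis
    using gamma_max_gt_1 by (simp add: field_simps)
qed

lemma seq_cond_nlap_power:
  assumes "seq_cond q p lam T" "\<phi> \<in> Sp q p"
  shows "T (k + N) ((nlap ^^ N) \<phi>) = (lam / of_real gamma_max) ^ N * T k \<phi>"
proof (induction N)
  case (Suc N)
  then show ?case
    using seq_cond_nlap[OF assms(1) _ nlap_power_Sp[OF assms(2), of N], of "k + Suc N"] by simp
qed simp

lemma seq_cond_vanishes_above_gamma_max:
  assumes T: "seq_cond q p lam T" and big: "cmod lam > gamma_max" and \<phi>: "\<phi> \<in> Sp q p"
  shows "T k \<phi> = 0"
proof -
  obtain M m where M: "M > 0" "\<And>\<phi> k. \<phi> \<in> Sp q p \<Longrightarrow> cmod (T k \<phi>) \<le> M * nu q p m \<phi>"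
    using seq_cond_uniform_bound[OF T] by blast
  define r where "r = cmod lam / gamma_max"
  have r: "r > 1"
    unfolding r_def using big gamma_max_gt_1 by simp
  have norm_ratio: "cmod (lam / of_real gamma_max) = r"
    unfolding r_def using gamma_max_gt_1 by (simp add: norm_divide)
  have bound: "cmod (T k \<phi>) \<le> M * nu q p m \<phi> * ((1 + real N) ^ m / r ^ N)" for N
  proof -
    have "cmod (T k \<phi>) * r ^ N = cmod (T (k + N) ((nlap ^^ N) \<phi>))"
      unfolding seq_cond_nlap_power[OF T \<phi>] norm_mult norm_power norm_ratio by simp
    also have "\<dots> \<le> M * nu q p m ((nlap ^^ N) \<phi>)"
      by (rule M(2)[OF nlap_power_Sp[OF \<phi>]])
    also have "\<dots> \<le> M * ((1 + real N) ^ m * nu q p m \<phi>)"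
      using nu_nlap_power_le[OF \<phi>] M(1) by (intro mult_left_mono) auto
    finally show ?thesis
      using r by (simp add: field_simps)
  qed
  have "(\<lambda>N. (1 + real N) ^ m / r ^ N) \<longlonglongrightarrow> 0"
    using r by real_asymp
  then have "(\<lambda>N. M * nu q p m \<phi> * ((1 + real N) ^ m / r ^ N)) \<longlonglongrightarrow> 0"
    by (rule tendsto_mult_right_zero)
  then have "cmod (T k \<phi>) \<le> 0"
    using LIMSEQ_le_const bound by (metis (mono_tags, lifting))
  then show ?thesis
    by simp
qed

lemma nlap_defect_power_nlap:
  "(nlap_defect ^^ i) (nlap f) = (\<lambda>x. (nlap_defect ^^ Suc i) f x + (nlap_defect ^^ i) f x)"
proof -
  have "nlap f = (\<lambda>x. nlap_defect f x + f x)"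
    unfolding nlap_defect_def by simp
  moreover have "(nlap_defect ^^ i) (\<lambda>x. g x + h x) = (\<lambda>x. (nlap_defect ^^ i) g x + (nlap_defect ^^ i) h x)"
    for g h
    by (induction i) (simp_all add: nlap_defect_add)
  ultimately show ?thesis
    by (simp add: funpow_Suc_right del: funpow.simps)
qed

lemma nlap_defect_power_commute: "(nlap_defect ^^ i) (nlap f) = nlap ((nlap_defect ^^ i) f)"
  by (induction i) (simp_all add: nlap_defect_nlap)

lemma smoothing_factor_le:
  fixes m n :: nat
  defines "K \<equiv> 2 * m + 2"
  shows "(1 + real (K * Suc n)) ^ m * binom_weight_diff_l1 n ^ K
    \<le> real (K + 1) ^ m * (coef_shift / coef_id) ^ Suc m / real (Suc n)"
proof -
  define s where "s = real (Suc n)"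
  have s: "s > 0"
    unfolding s_def by simp
  have growth: "(1 + real (K * Suc n)) ^ m \<le> (real (K + 1) * s) ^ m"
    unfolding s_def by (intro power_mono) (simp_all add: algebra_simps)
  have "K = 2 * Suc m"
    unfolding K_def by simp
  then have "binom_weight_diff_l1 n ^ K = (binom_weight_diff_l1 n ^ 2) ^ Suc m"
    by (simp only: power_mult)
  also have "\<dots> \<le> (coef_shift / (s * coef_id)) ^ Suc m"
    unfolding s_def by (intro power_mono binom_weight_diff_l1_sq_le) simp
  finally have decay: "binom_weight_diff_l1 n ^ K \<le> (coef_shift / (s * coef_id)) ^ Suc m" .
  have "(1 + real (K * Suc n)) ^ m * binom_weight_diff_l1 n ^ K
      \<le> (real (K + 1) * s) ^ m * (coef_shift / (s * coef_id)) ^ Suc m"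
    using s by (intro mult_mono growth decay) (auto simp: binom_weight_diff_l1_def)
  also have "\<dots> = real (K + 1) ^ m * (coef_shift / coef_id) ^ Suc m / s"
    unfolding power_mult_distrib power_divide using s coef_id_pos by (simp add: field_simps)
  finally show ?thesis
    unfolding s_def .
qed

lemma seq_cond_defect_power_eq_0:
  assumes T: "seq_cond q p lam T" and unimodular: "cmod lam = gamma_max"
    and M: "\<And>\<phi> k. \<phi> \<in> Sp q p \<Longrightarrow> cmod (T k \<phi>) \<le> M * nu q p m \<phi>" "M > 0"
    and \<phi>: "\<phi> \<in> Sp q p"
  shows "T k ((nlap_defect ^^ (2 * m + 2)) \<phi>) = 0"
proof (rule norm_le_div_Suc_imp_zero)
  fix n
  define K where "K = 2 * m + 2"
  define \<psi> where "\<psi> = (nlap_defect ^^ K) \<phi>"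
  have \<psi>: "\<psi> \<in> Sp q p"
    unfolding \<psi>_def by (rule nlap_defect_power_Sp[OF \<phi>])
  have "cmod (lam / of_real gamma_max) = 1"
    using unimodular gamma_max_gt_1 by (simp add: norm_divide)
  then have "cmod (T k \<psi>) = cmod (T (k + n * K) ((nlap ^^ (n * K)) \<psi>))"
    unfolding seq_cond_nlap_power[OF T \<psi>] by (simp add: norm_mult norm_power)
  also have "\<dots> \<le> M * nu q p m ((nlap ^^ (n * K)) \<psi>)"
    by (rule M(1)[OF nlap_power_Sp[OF \<psi>]])
  also have "\<dots> \<le> M * ((1 + real (K * Suc n)) ^ m * binom_weight_diff_l1 n ^ K * nu q p m \<phi>)"
    using nu_smoothed_defect_power_le[OF \<phi>, of m n K] M(2) unfolding \<psi>_def
    by (simp add: mult.assoc)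
  also have "\<dots> \<le> M * (real (K + 1) ^ m * (coef_shift / coef_id) ^ Suc m / real (Suc n) * nu q p m \<phi>)"
    using smoothing_factor_le[of m n] nu_nonneg[OF \<phi>] M(2) unfolding K_def
    by (intro mult_left_mono mult_right_mono) auto
  finally show "cmod (T k ((nlap_defect ^^ (2 * m + 2)) \<phi>))
      \<le> M * real (K + 1) ^ m * (coef_shift / coef_id) ^ Suc m * nu q p m \<phi> / real (Suc n)"
    unfolding \<psi>_def K_def by (simp add: field_simps)
qed

lemma seq_cond_defect_power_descent:
  assumes T: "seq_cond q p lam T" and unimodular: "cmod lam = gamma_max"
    and M: "\<And>\<phi> k. \<phi> \<in> Sp q p \<Longrightarrow> cmod (T k \<phi>) \<le> M * nu q p m \<phi>"
    and vanish: "\<forall>k. \<forall>\<phi>\<in>Sp q p. T k ((nlap_defect ^^ Suc (Suc j)) \<phi>) = 0"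
    and \<phi>: "\<phi> \<in> Sp q p"
  shows "T k ((nlap_defect ^^ Suc j) \<phi>) = 0"
proof -
  define \<omega> where "\<omega> = lam / of_real gamma_max"
  have \<omega>: "cmod \<omega> = 1"
    unfolding \<omega>_def using unimodular gamma_max_gt_1 by (simp add: norm_divide)
  have defect_Sp: "(nlap_defect ^^ i) \<phi> \<in> Sp q p" for i
    by (rule nlap_defect_power_Sp[OF \<phi>])
  have shift: "\<omega> * T k ((nlap_defect ^^ i) \<phi>) =
      T (Suc k) ((nlap_defect ^^ Suc i) \<phi>) + T (Suc k) ((nlap_defect ^^ i) \<phi>)" for k i
  proof -
    have "\<omega> * T k ((nlap_defect ^^ i) \<phi>) = T (Suc k) ((nlap_defect ^^ i) (nlap \<phi>))"
      unfolding nlap_defect_power_commute \<omega>_def using seq_cond_nlap[OF T _ defect_Sp, of "Suc k" i]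
      by simp
    also have "\<dots> = T (Suc k) ((nlap_defect ^^ Suc i) \<phi>) + T (Suc k) ((nlap_defect ^^ i) \<phi>)"
      unfolding nlap_defect_power_nlap by (rule tempered_add[OF seq_cond_tempered[OF T] defect_Sp defect_Sp])
    finally show ?thesis .
  qed
  define S where "S k = T k ((nlap_defect ^^ Suc j) \<phi>)" for k
  define R where "R k = T k ((nlap_defect ^^ j) \<phi>)" for k
  obtain B where "\<And>k. cmod (R k) \<le> B"
    unfolding R_def using M[OF defect_Sp] by blast
  moreover have "S (Suc k) = \<omega> * S k" for k
    using shift[of k "Suc j"] vanish \<phi> unfolding S_def by simp
  moreover have "\<omega> * R k = S (Suc k) + R (Suc k)" for k
    using shift[of k j] unfolding S_def R_def .
  ultimately have "S 0 = 0"
    using bounded_jordan_chain_top_eq_0[OF \<omega>] by blast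
  moreover have "S k = \<omega> ^ k * S 0"
    by (induction k) (simp_all add: \<open>\<And>k. S (Suc k) = \<omega> * S k\<close>)
  ultimately show ?thesis
    unfolding S_def by simp
qed

lemma seq_cond_eigen_at_gamma_max:
  assumes T: "seq_cond q p lam T" and unimodular: "cmod lam = gamma_max" and \<phi>: "\<phi> \<in> Sp q p"
  shows "T 0 (lap q \<phi>) = of_real (cmod lam) * T 0 \<phi>"
proof -
  obtain M m where M: "M > 0" "\<And>\<phi> k. \<phi> \<in> Sp q p \<Longrightarrow> cmod (T k \<phi>) \<le> M * nu q p m \<phi>"
    using seq_cond_uniform_bound[OF T] by blast
  have "\<forall>k. \<forall>\<phi>\<in>Sp q p. T k ((nlap_defect ^^ Suc j) \<phi>) = 0" if "j \<le> 2 * m + 1" for j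
    using that
  proof (induction j rule: inc_induct)
    case base
    show ?case
      using seq_cond_defect_power_eq_0[OF T unimodular M(2) M(1)] by (simp add: numeral_2_eq_2)
  next
    case (step j)
    then show ?case
      using seq_cond_defect_power_descent[OF T unimodular M(2)] by blast
  qed
  then have "T 0 (nlap_defect \<phi>) = 0"
    using \<phi> by fastforce
  then have "T 0 (nlap \<phi>) = T 0 \<phi>"
    unfolding nlap_defect_def using tempered_diff[OF seq_cond_tempered[OF T] nlap_Sp[OF \<phi>] \<phi>] by simp
  moreover have "T 0 (lap q \<phi>) = of_real gamma_max * T 0 (nlap \<phi>)"
    unfolding lap_eq_nlap by (rule tempered_scale[OF seq_cond_tempered[OF T] nlap_Sp[OF \<phi>]])
  ultimately show ?thesis
    using unimodular by simp
qed

section \<open>Radial functionals and spherical functions\<close>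

definition dual_rate :: real where
  "dual_rate = 1 - 1 / p"

lemma norm_sphere_sum_le:
  assumes "f \<in> Sp q p"
  shows "cmod (sphere_sum q f n) \<le> (Q + 1) * nu q p 2 f * Q powr (real n * dual_rate) / (1 + real n) ^ 2"
proof -
  have "cmod (sphere_sum q f n) \<le> (\<Sum>x\<in>tree_sphere q n. cmod (f x))"
    unfolding sphere_sum_def by (rule norm_sum)
  also have "\<dots> \<le> (\<Sum>x\<in>tree_sphere q n. nu q p 2 f * (Q powr (- real n / p) / (1 + real n) ^ 2))"
    using dominated_nu[OF assms, of 2]
    by (intro sum_mono) (auto simp: dominated_def envelope_def base_decay_def tree_sphere_def)
  also have "\<dots> = real (card (tree_sphere q n)) * (nu q p 2 f * (Q powr (- real n / p) / (1 + real n) ^ 2))"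
    by simp
  also have "\<dots> \<le> ((Q + 1) * Q ^ n) * (nu q p 2 f * (Q powr (- real n / p) / (1 + real n) ^ 2))"
    using card_tree_sphere_le[of q n] q_ge_2 nu_nonneg[OF assms] by (intro mult_right_mono) auto
  finally have "cmod (sphere_sum q f n) \<le>
      (Q + 1) * nu q p 2 f * (Q ^ n * Q powr (- real n / p)) / (1 + real n) ^ 2"
    by (simp add: mult_ac)
  moreover have "Q ^ n * Q powr (- real n / p) = Q powr (real n * dual_rate)"
    using Q_gt_1 by (simp add: powr_realpow[symmetric] powr_add[symmetric] dual_rate_def algebra_simps)
  ultimately show ?thesis
    by simp
qed

definition radial_pairing :: "(nat \<Rightarrow> complex) \<Rightarrow> (nat list \<Rightarrow> complex) \<Rightarrow> complex" where
  "radial_pairing g f = (\<Sum>n. g n * sphere_sum q f n)"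

definition radial_eigen :: "(nat \<Rightarrow> complex) \<Rightarrow> complex \<Rightarrow> bool" where
  "radial_eigen g \<mu> \<longleftrightarrow> g 0 - g 1 = \<mu> * g 0 \<and>
     (\<forall>k. g (Suc k) - (g k + of_nat q * g (Suc (Suc k))) / (of_nat q + 1) = \<mu> * g (Suc k))"

text \<open>The same recurrence, written uniformly in \<open>j\<close>: the root has \<open>q + 1\<close> children and no parent.\<close>

lemma radial_eigen_recurrence:
  assumes "radial_eigen g \<mu>"
  shows "g j - ((if j = 0 then 0 else g (j - 1)) + of_nat (if j = 0 then q + 1 else q) * g (Suc j))
    / (of_nat q + 1) = \<mu> * g j"
proof (cases j)
  case 0
  have "(of_nat q + 1 :: complex) \<noteq> 0"
    using of_nat_neq_0[of q, where 'a = complex] by (simp add: add.commute)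
  with 0 assms show ?thesis
    unfolding radial_eigen_def by (simp add: add.commute)
qed (use assms in \<open>simp add: radial_eigen_def mult.commute\<close>)

context
  fixes g :: "nat \<Rightarrow> complex" and C :: real
  assumes decay: "\<And>n. cmod (g n) \<le> C * Q powr (- dual_rate * real n)"
begin

lemma norm_radial_term_le:
  assumes "f \<in> Sp q p"
  shows "cmod (g a * sphere_sum q f b)
    \<le> C * (Q + 1) * nu q p 2 f * Q powr (dual_rate * (real b - real a)) / (1 + real b) ^ 2"
proof -
  have "cmod (g a * sphere_sum q f b) \<le>
      C * Q powr (- dual_rate * real a) * ((Q + 1) * nu q p 2 f * Q powr (real b * dual_rate) / (1 + real b) ^ 2)"
    unfolding norm_mult using decay[of a] norm_sphere_sum_le[OF assms, of b]
    by (intro mult_mono) (auto intro: order_trans[OF norm_ge_zero])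
  also have "\<dots> = C * (Q + 1) * nu q p 2 f * (Q powr (- dual_rate * real a) * Q powr (real b * dual_rate))
      / (1 + real b) ^ 2"
    by simp
  also have "Q powr (- dual_rate * real a) * Q powr (real b * dual_rate) = Q powr (dual_rate * (real b - real a))"
    by (simp add: powr_add[symmetric] algebra_simps)
  finally show ?thesis .
qed

lemma norm_radial_diagonal_term_le:
  "f \<in> Sp q p \<Longrightarrow> cmod (g n * sphere_sum q f n) \<le> C * (Q + 1) * nu q p 2 f / (1 + real n) ^ 2"
  using norm_radial_term_le[of f n n] Q_gt_1 by simp

lemma summable_radial_terms:
  assumes "f \<in> Sp q p"
  shows "summable (\<lambda>n. cmod (g n * sphere_sum q f n))"
    and "summable (\<lambda>n. cmod (g n * sphere_sum q f (Suc n)))"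
    and "summable (\<lambda>n. cmod (g (Suc n) * sphere_sum q f n))"
proof -
  show "summable (\<lambda>n. cmod (g n * sphere_sum q f n))"
    using norm_radial_diagonal_term_le[OF assms] by (rule summable_norm_of_inverse_square_bound)
  have "cmod (g (Suc n) * sphere_sum q f n) \<le> C * (Q + 1) * nu q p 2 f * Q powr (- dual_rate) / (1 + real n) ^ 2"
    for n
    using norm_radial_term_le[OF assms, of "Suc n" n] by simp
  then show "summable (\<lambda>n. cmod (g (Suc n) * sphere_sum q f n))"
    by (rule summable_norm_of_inverse_square_bound)
  define K where "K = C * (Q + 1) * nu q p 2 f * Q powr dual_rate"
  have le: "cmod (g n * sphere_sum q f (Suc n)) \<le> K / (1 + real (Suc n)) ^ 2" for n
    using norm_radial_term_le[OF assms, of n "Suc n"] unfolding K_def by simp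
  have "K \<ge> 0"
    using order_trans[OF norm_ge_zero le[of 0]] by (simp add: zero_le_divide_iff)
  then have "K / (1 + real (Suc n)) ^ 2 \<le> K / (1 + real n) ^ 2" for n
    by (intro divide_left_mono power_mono) auto
  then have "cmod (g n * sphere_sum q f (Suc n)) \<le> K / (1 + real n) ^ 2" for n
    using le[of n] by (rule order_trans[rotated])
  then show "summable (\<lambda>n. cmod (g n * sphere_sum q f (Suc n)))"
    by (rule summable_norm_of_inverse_square_bound)
qed

lemma norm_radial_pairing_le:
  assumes "f \<in> Sp q p"
  shows "cmod (radial_pairing g f) \<le> C * (Q + 1) * (\<Sum>n. 1 / (1 + real n) ^ 2) * nu q p 2 f"
proof -
  have "cmod (radial_pairing g f) \<le> (\<Sum>n. cmod (g n * sphere_sum q f n))"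
    unfolding radial_pairing_def by (rule summable_norm[OF summable_radial_terms(1)[OF assms]])
  also have "\<dots> \<le> (\<Sum>n. C * (Q + 1) * nu q p 2 f * (1 / (1 + real n) ^ 2))"
  proof (rule suminf_le)
    show "cmod (g n * sphere_sum q f n) \<le> C * (Q + 1) * nu q p 2 f * (1 / (1 + real n) ^ 2)" for n
      using norm_radial_diagonal_term_le[OF assms, of n] by simp
  qed (intro summable_radial_terms(1)[OF assms] summable_mult summable_inverse_Suc_square)+
  also have "\<dots> = C * (Q + 1) * (\<Sum>n. 1 / (1 + real n) ^ 2) * nu q p 2 f"
    by (subst suminf_mult[OF summable_inverse_Suc_square]) simp
  finally show ?thesis .
qed

lemma radial_pairing_sums:
  "f \<in> Sp q p \<Longrightarrow> (\<lambda>n. g n * sphere_sum q f n) sums radial_pairing g f"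
  unfolding radial_pairing_def
  by (rule summable_sums, rule summable_norm_cancel, rule summable_radial_terms)

lemma radial_pairing_add:
  "f1 \<in> Sp q p \<Longrightarrow> f2 \<in> Sp q p \<Longrightarrow>
    radial_pairing g (\<lambda>x. f1 x + f2 x) = radial_pairing g f1 + radial_pairing g f2"
  unfolding radial_pairing_def sphere_sum_add distrib_left
  by (intro sums_unique[symmetric] sums_add radial_pairing_sums[unfolded radial_pairing_def])

lemma radial_pairing_scale:
  "f \<in> Sp q p \<Longrightarrow> radial_pairing g (\<lambda>x. c * f x) = c * radial_pairing g f"
  unfolding radial_pairing_def sphere_sum_scale mult.left_commute[of "g _"]
  by (intro sums_unique[symmetric] sums_mult radial_pairing_sums[unfolded radial_pairing_def])

text \<open>Summation by parts: \<open>lap\<close> moves from \<open>f\<close> onto the radial function \<open>g\<close>, on which it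
  acts by the recurrence in \<open>radial_eigen\<close>.\<close>

lemma radial_pairing_lap:
  assumes f: "f \<in> Sp q p" and eigen: "radial_eigen g \<mu>"
  shows "radial_pairing g (lap q f) = \<mu> * radial_pairing g f"
proof -
  define a where "a = sphere_sum q f"
  define d :: complex where "d = 1 / (of_nat q + 1)"
  define c :: "nat \<Rightarrow> complex" where "c j = of_nat (if j = 0 then q + 1 else q)" for j
  define inner where "inner n = g (Suc n) * (c n * a n)" for n
  define outer where "outer n = g n * a (Suc n)" for n
  define shifted :: "(nat \<Rightarrow> complex) \<Rightarrow> nat \<Rightarrow> complex"
    where "shifted u n = (if n = 0 then 0 else u (n - 1))" for u n
  have shifted_sums: "u sums s \<Longrightarrow> shifted u sums s" for u s
    using sums_Suc_iff[of "shifted u" s] by (simp add: shifted_def)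
  have inner_summable: "summable (\<lambda>n. real (q + 1) * cmod (g (Suc n) * a n))"
    unfolding a_def by (intro summable_mult summable_radial_terms(3)[OF f])
  have inner_bound: "norm (cmod (inner n)) \<le> real (q + 1) * cmod (g (Suc n) * a n)" for n
  proof -
    have "cmod (c n) \<le> real (q + 1)"
      by (simp add: c_def)
    from mult_right_mono[OF this, of "cmod (g (Suc n) * a n)"] show ?thesis
      by (simp add: inner_def norm_mult mult_ac)
  qed
  have "summable (\<lambda>n. cmod (inner n))"
    by (rule summable_comparison_test'[OF inner_summable inner_bound])
  then obtain s_in where s_in: "inner sums s_in"
    using summable_norm_cancel unfolding summable_def by blast
  obtain s_out where s_out: "outer sums s_out"
    using summable_norm_cancel[OF summable_radial_terms(2)[OF f]]
    unfolding outer_def a_def summable_def by blast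
  have P: "(\<lambda>n. g n * a n) sums radial_pairing g f"
    unfolding a_def by (rule radial_pairing_sums[OF f])
  define total where "total = radial_pairing g f - d * (s_in + s_out)"
  have "(\<lambda>n. g n * a n - d * (shifted inner n + outer n)) sums total"
    unfolding total_def by (intro sums_diff P sums_mult sums_add shifted_sums s_in s_out)
  moreover have "g n * a n - d * (shifted inner n + outer n) = g n * sphere_sum q (lap q f) n" for n
    unfolding sphere_sum_lap d_def[symmetric] a_def[symmetric]
    by (cases n) (simp_all add: inner_def outer_def shifted_def c_def algebra_simps)
  ultimately have lhs: "(\<lambda>n. g n * sphere_sum q (lap q f) n) sums total"
    by simp
  have eigen_terms: "g j - d * ((if j = 0 then 0 else g (j - 1)) + c j * g (Suc j)) = \<mu> * g j" for j
    using radial_eigen_recurrence[OF eigen, of j] unfolding c_def d_def by simp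
  have "g n * a n - d * (inner n + shifted outer n) =
      (g n - d * ((if n = 0 then 0 else g (n - 1)) + c n * g (Suc n))) * a n" for n
    by (cases n) (simp_all add: inner_def outer_def shifted_def algebra_simps)
  then have "g n * a n - d * (inner n + shifted outer n) = \<mu> * (g n * a n)" for n
    unfolding eigen_terms by simp
  moreover have "(\<lambda>n. g n * a n - d * (inner n + shifted outer n)) sums total"
    unfolding total_def by (intro sums_diff P sums_mult sums_add shifted_sums s_in s_out)
  ultimately have "(\<lambda>n. \<mu> * (g n * a n)) sums total"
    by simp
  with lhs P show ?thesis
    unfolding radial_pairing_def by (metis sums_mult sums_unique)
qed
end

definition dirac :: "nat list \<Rightarrow> nat list \<Rightarrow> complex" where
  "dirac x = (\<lambda>y. if y = x then 1 else 0)"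

lemma dirac_Sp:
  assumes "x \<in> V"
  shows "dirac x \<in> Sp q p"
proof (rule Sp_of_dominated)
  show "dirac x \<in> tree_functions"
    using assms unfolding dirac_def tree_functions_def by auto
  show "\<exists>C D. dominated m C D (dirac x)" for m
  proof (intro exI)
    show "dominated m (1 / envelope m 0 x) 0 (dirac x)"
      unfolding dominated_def dirac_def
    proof
      fix y
      show "cmod (if y = x then 1 else 0) \<le> 1 / envelope m 0 x * envelope m 0 y"
        using envelope_pos[of m 0 x] envelope_pos[of m 0 y] by (cases "y = x") (auto simp: less_imp_le)
    qed
  qed
qed

lemma radial_pairing_dirac:
  assumes "x \<in> V"
  shows "radial_pairing g (dirac x) = g (length x)"
proof -
  have "sphere_sum q (dirac x) n = (if x \<in> tree_sphere q n then 1 else 0)" for n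
    unfolding sphere_sum_def dirac_def by (simp add: finite_tree_sphere)
  then have "(\<lambda>n. g n * sphere_sum q (dirac x) n) = (\<lambda>n. if n = length x then g n else 0)"
    using assms unfolding tree_sphere_def by auto
  then show ?thesis
    unfolding radial_pairing_def using sums_unique[OF sums_single[of "length x" g]] by simp
qed

lemma tempered_of_nu_bound:
  assumes linear: "\<forall>f\<in>Sp q p. \<forall>g\<in>Sp q p. \<forall>c. T (\<lambda>x. f x + g x) = T f + T g \<and> T (\<lambda>x. c * f x) = c * T f"
    and bound: "\<And>\<phi>. \<phi> \<in> Sp q p \<Longrightarrow> cmod (T \<phi>) \<le> K * nu q p m \<phi>"
  shows "tempered q p T"
  unfolding tempered_def
proof (intro conjI linear allI impI)
  fix F :: "nat \<Rightarrow> nat list \<Rightarrow> complex"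
  assume F: "(\<forall>n. F n \<in> Sp q p) \<and> (\<forall>m. (\<lambda>n. nu q p m (F n)) \<longlonglongrightarrow> 0)"
  have lim: "(\<lambda>n. K * nu q p m (F n)) \<longlonglongrightarrow> 0"
    using F tendsto_mult_right_zero by blast
  have "(\<lambda>n. cmod (T (F n))) \<longlonglongrightarrow> 0"
    by (rule real_tendsto_sandwich[of "\<lambda>_. 0" _ _ "\<lambda>n. K * nu q p m (F n)"])
      (use F bound lim in auto)
  then show "(\<lambda>n. T (F n)) \<longlonglongrightarrow> 0"
    by (rule tendsto_norm_zero_cancel)
qed

text \<open>Radial eigenfunctions are combinations of \<open>\<rho>\<^sup>n\<close> and \<open>\<sigma>\<^sup>n\<close>, the roots of
  \<open>q r\<^sup>2 - q (\<rho> + \<sigma>) r + 1\<close>; for \<open>|\<rho>| = q\<^sup>-\<^sup>1\<^sup>/\<^sup>p\<close> both decay at least like \<open>q\<^sup>-\<^sup>n\<^sup>/\<^sup>p\<^sup>'\<close>,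
  which is what the pairing with \<open>S\<^sub>p\<close> requires.\<close>

lemma geometric_radial_recurrence:
  fixes \<rho> \<sigma> r :: complex
  assumes \<rho>\<sigma>: "of_nat q * \<rho> * \<sigma> = 1" and r: "r = \<rho> \<or> r = \<sigma>"
  shows "r ^ Suc k - (r ^ k + of_nat q * r ^ Suc (Suc k)) / (of_nat q + 1) =
    (1 - of_nat q / (of_nat q + 1) * (\<rho> + \<sigma>)) * r ^ Suc k"
proof -
  have "of_nat q * (\<rho> + \<sigma>) * r = of_nat q * r ^ 2 + of_nat q * \<rho> * \<sigma>"
    using r by (auto simp: power2_eq_square algebra_simps)
  then have root: "of_nat q * r ^ 2 + 1 = of_nat q * (\<rho> + \<sigma>) * r"
    unfolding \<rho>\<sigma> by simp
  have "r ^ k + of_nat q * r ^ Suc (Suc k) = r ^ k * (of_nat q * r ^ 2 + 1)"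
    by (simp add: power2_eq_square algebra_simps)
  also have "\<dots> = of_nat q * (\<rho> + \<sigma>) * r ^ Suc k"
    unfolding root by (simp add: algebra_simps)
  finally show ?thesis
    by (simp add: algebra_simps)
qed

lemma radial_eigen_geometric_combination:
  fixes \<rho> \<sigma> :: complex
  assumes \<rho>\<sigma>: "of_nat q * \<rho> * \<sigma> = 1" and "\<rho> \<noteq> \<sigma>"
  defines "\<mu> \<equiv> 1 - of_nat q / (of_nat q + 1) * (\<rho> + \<sigma>)"
  defines "A \<equiv> (1 - \<mu> - \<sigma>) / (\<rho> - \<sigma>)"
  shows "radial_eigen (\<lambda>n. A * \<rho> ^ n + (1 - A) * \<sigma> ^ n) \<mu>"
proof -
  define g where "g n = A * \<rho> ^ n + (1 - A) * \<sigma> ^ n" for n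
  have "g 1 = A * (\<rho> - \<sigma>) + \<sigma>"
    unfolding g_def by (simp add: algebra_simps)
  also have "A * (\<rho> - \<sigma>) = 1 - \<mu> - \<sigma>"
    unfolding A_def using \<open>\<rho> \<noteq> \<sigma>\<close> by simp
  finally have g1: "g 1 = 1 - \<mu>"
    by simp
  have "g (Suc k) - (g k + of_nat q * g (Suc (Suc k))) / (of_nat q + 1) = \<mu> * g (Suc k)" for k
  proof -
    have "g (Suc k) - (g k + of_nat q * g (Suc (Suc k))) / (of_nat q + 1) =
        A * (\<rho> ^ Suc k - (\<rho> ^ k + of_nat q * \<rho> ^ Suc (Suc k)) / (of_nat q + 1)) +
        (1 - A) * (\<sigma> ^ Suc k - (\<sigma> ^ k + of_nat q * \<sigma> ^ Suc (Suc k)) / (of_nat q + 1))"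
      unfolding g_def by (simp add: add_divide_distrib diff_divide_distrib algebra_simps)
    also have "\<dots> = A * (\<mu> * \<rho> ^ Suc k) + (1 - A) * (\<mu> * \<sigma> ^ Suc k)"
      using geometric_radial_recurrence[OF \<rho>\<sigma>, of \<rho> k] geometric_radial_recurrence[OF \<rho>\<sigma>, of \<sigma> k]
      unfolding \<mu>_def by simp
    also have "\<dots> = \<mu> * g (Suc k)"
      unfolding g_def by (simp add: algebra_simps)
    finally show ?thesis .
  qed
  with g1 show ?thesis
    unfolding radial_eigen_def g_def by simp
qed

lemma norm_geometric_combination_le:
  fixes \<rho> \<sigma> A B :: complex
  assumes "cmod \<rho> \<le> r" and "cmod \<sigma> \<le> r"
  shows "cmod (A * \<rho> ^ n + B * \<sigma> ^ n) \<le> (cmod A + cmod B) * r ^ n"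
proof -
  have "cmod \<rho> ^ n \<le> r ^ n" "cmod \<sigma> ^ n \<le> r ^ n"
    using assms by (simp_all add: power_mono)
  then have "cmod A * cmod \<rho> ^ n + cmod B * cmod \<sigma> ^ n \<le> cmod A * r ^ n + cmod B * r ^ n"
    by (intro add_mono mult_left_mono) auto
  then show ?thesis
    using norm_triangle_ineq[of "A * \<rho> ^ n" "B * \<sigma> ^ n"]
    by (simp add: norm_mult norm_power distrib_right)
qed

lemma exists_radial_eigenfunction:
  fixes \<rho> :: complex
  assumes \<rho>: "cmod \<rho> = Q powr (-1/p)" and non_double: "of_nat q * \<rho> ^ 2 \<noteq> 1"
  shows "\<exists>g C. (\<forall>n. cmod (g n) \<le> C * Q powr (- dual_rate * real n)) \<and> g 0 = 1 \<and>
    radial_eigen g (1 - of_nat q / (of_nat q + 1) * (\<rho> + 1 / (of_nat q * \<rho>)))"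
proof -
  define \<sigma> where "\<sigma> = 1 / (of_nat q * \<rho>)"
  have "\<rho> \<noteq> 0"
    using \<rho> Q_gt_1 by auto
  then have \<rho>\<sigma>: "of_nat q * \<rho> * \<sigma> = 1"
    unfolding \<sigma>_def using q_ge_2 by simp
  have "\<rho> \<noteq> \<sigma>"
  proof
    assume "\<rho> = \<sigma>"
    with \<rho>\<sigma> have "of_nat q * \<rho> ^ 2 = 1"
      by (simp add: power2_eq_square mult.assoc)
    with non_double show False ..
  qed
  have \<sigma>: "cmod \<sigma> = Q powr (- dual_rate)"
  proof -
    have "cmod \<sigma> = 1 / (Q * Q powr (-1/p))"
      unfolding \<sigma>_def using \<rho> by (simp add: norm_divide norm_mult)
    also have "Q * Q powr (-1/p) = Q powr dual_rate"
      unfolding dual_rate_def by (rule Q_mult_Q_powr_neg_inv_p)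
    also have "1 / Q powr dual_rate = Q powr (- dual_rate)"
      by (simp add: powr_minus divide_inverse)
    finally show ?thesis .
  qed
  have "dual_rate \<le> 1 / p"
    unfolding dual_rate_def using p_pos p_lt_2 by (simp add: field_simps)
  then have "cmod \<rho> \<le> Q powr (- dual_rate)"
    unfolding \<rho> using Q_gt_1 by (intro powr_mono) auto
  with \<sigma> have bound: "cmod (A * \<rho> ^ n + (1 - A) * \<sigma> ^ n)
      \<le> (cmod A + cmod (1 - A)) * Q powr (- dual_rate * real n)" for A n
    using norm_geometric_combination_le[where r = "Q powr (- dual_rate)" and A = A and B = "1 - A"] Q_gt_1
    by (simp add: powr_power mult.commute)
  define A where "A = (1 - (1 - of_nat q / (of_nat q + 1) * (\<rho> + \<sigma>)) - \<sigma>) / (\<rho> - \<sigma>)"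
  have "radial_eigen (\<lambda>n. A * \<rho> ^ n + (1 - A) * \<sigma> ^ n) (1 - of_nat q / (of_nat q + 1) * (\<rho> + \<sigma>))"
    unfolding A_def by (rule radial_eigen_geometric_combination[OF \<rho>\<sigma> \<open>\<rho> \<noteq> \<sigma>\<close>])
  with bound[of A] show ?thesis
    unfolding \<sigma>_def[symmetric]
    by (intro exI[of _ "\<lambda>n. A * \<rho> ^ n + (1 - A) * \<sigma> ^ n"] exI[of _ "cmod A + cmod (1 - A)"]) simp
qed

lemma kappa_le_1: "kappa \<le> 1"
proof -
  have ge_1: "Q powr (1/p) \<ge> 1" "Q powr (1 - 1/p) \<ge> 1"
    using Q_gt_1 p_gt_1 by (auto intro!: ge_one_powr_ge_zero simp: field_simps)
  have "Q powr (1/p) * Q powr (1 - 1/p) = Q"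
    using Q_gt_1 by (simp add: powr_add[symmetric])
  moreover have "0 \<le> (Q powr (1/p) - 1) * (Q powr (1 - 1/p) - 1)"
    using ge_1 by simp
  ultimately have "Q powr (1/p) + Q powr (1 - 1/p) \<le> Q + 1"
    by (simp add: algebra_simps)
  then show ?thesis
    unfolding kappa_def using Q_gt_1 by simp
qed

definition rho_p :: real where
  "rho_p = Q powr (-1/p)"

lemma rho_p_pos: "rho_p > 0"
  unfolding rho_p_def using Q_gt_1 by simp

lemma Q_mult_rho_p_sq_lt_1: "Q * rho_p ^ 2 < 1"
proof -
  have "Q * rho_p ^ 2 = Q powr (1 - 1/p) * Q powr (-1/p)"
    unfolding Q_mult_Q_powr_neg_inv_p[symmetric] rho_p_def by (simp add: power2_eq_square)
  also have "\<dots> = Q powr (1 - 2/p)"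
    by (simp add: powr_add[symmetric])
  also have "\<dots> < Q powr 0"
    using Q_gt_1 p_lt_2 p_pos by (intro powr_less_mono) (auto simp: field_simps)
  finally show ?thesis
    using Q_gt_1 by simp
qed

text \<open>The eigenvalue of the spherical function \<open>\<rho>\<^sup>n\<close>, \<open>\<rho> = q\<^sup>-\<^sup>1\<^sup>/\<^sup>p e\<^sup>i\<^sup>\<theta>\<close>; it runs over the
  ellipse bounding the \<open>L\<^sup>p\<close>-spectrum.\<close>

definition spherical_eigenvalue :: "real \<Rightarrow> complex" where
  "spherical_eigenvalue \<theta> = 1 - of_nat q / (of_nat q + 1) *
     (of_real rho_p * cis \<theta> + 1 / (of_nat q * (of_real rho_p * cis \<theta>)))"

definition kappa_minor :: real where
  "kappa_minor = Q / (Q + 1) * (rho_p - 1 / (Q * rho_p))"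

lemma kappa_minor_neq_0: "kappa_minor \<noteq> 0"
proof -
  have "rho_p - 1 / (Q * rho_p) \<noteq> 0"
  proof
    assume "rho_p - 1 / (Q * rho_p) = 0"
    then have "Q * rho_p ^ 2 = 1"
      using Q_gt_1 rho_p_pos by (simp add: field_simps power2_eq_square)
    with Q_mult_rho_p_sq_lt_1 show False
      by simp
  qed
  then show ?thesis
    unfolding kappa_minor_def using Q_gt_1 by simp
qed

lemma spherical_eigenvalue_eq:
  "spherical_eigenvalue \<theta> = Complex (1 - kappa * cos \<theta>) (- kappa_minor * sin \<theta>)"
proof -
  have Q_rho: "Q * rho_p = Q powr (1 - 1/p)"
    unfolding rho_p_def by (rule Q_mult_Q_powr_neg_inv_p)
  have inverse_rho: "1 / rho_p = Q powr (1/p)"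
    unfolding rho_p_def by (simp add: powr_minus divide_inverse)
  have kappa: "Q / (Q + 1) * (rho_p + 1 / (Q * rho_p)) = kappa"
  proof -
    have "Q * (rho_p + 1 / (Q * rho_p)) = Q * rho_p + 1 / rho_p"
      using Q_gt_1 by (simp add: distrib_left)
    then show ?thesis
      unfolding kappa_def Q_rho inverse_rho by (simp add: add.commute)
  qed
  have "(of_nat q * (of_real rho_p * cis \<theta>)) * (of_real (1 / (Q * rho_p)) * cis (- \<theta>)) = (1 :: complex)"
    using Q_gt_1 rho_p_pos by (simp add: cis_mult field_simps)
  from inverse_unique[OF this]
  have "1 / (of_nat q * (of_real rho_p * cis \<theta>)) = of_real (1 / (Q * rho_p)) * cis (- \<theta>)"
    by (simp only: inverse_eq_divide)
  then have "spherical_eigenvalue \<theta> =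
      1 - of_real (Q / (Q + 1)) * (of_real rho_p * cis \<theta> + of_real (1 / (Q * rho_p)) * cis (- \<theta>))"
    unfolding spherical_eigenvalue_def by simp
  also have "\<dots> = Complex (1 - kappa * cos \<theta>) (- kappa_minor * sin \<theta>)"
    unfolding kappa[symmetric] kappa_minor_def
    by (simp add: complex_eq_iff algebra_simps)
  finally show ?thesis .
qed

lemma norm_spherical_eigenvalue:
  "cmod (spherical_eigenvalue \<theta>) = sqrt ((1 - kappa * cos \<theta>) ^ 2 + (kappa_minor * sin \<theta>) ^ 2)"
  unfolding spherical_eigenvalue_eq norm_complex_def by simp

lemma exists_spherical_eigenvalue_norm:
  assumes "1 - kappa < r" "r < gamma_max"
  shows "\<exists>\<theta>. 0 < \<theta> \<and> \<theta> < pi \<and> cmod (spherical_eigenvalue \<theta>) = r"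
proof -
  define F where "F \<theta> = sqrt ((1 - kappa * cos \<theta>) ^ 2 + (kappa_minor * sin \<theta>) ^ 2)" for \<theta>
  have F0: "F 0 = 1 - kappa"
    unfolding F_def using kappa_le_1 by simp
  have Fpi: "F pi = gamma_max"
    unfolding F_def gamma_max_def using kappa_pos by simp
  have "continuous_on {0..pi} F"
    unfolding F_def by (intro continuous_intros)
  then obtain \<theta> where "0 \<le> \<theta>" "\<theta> \<le> pi" "F \<theta> = r"
    using IVT'[of F 0 r pi] F0 Fpi assms by auto
  moreover have "\<theta> \<noteq> 0" "\<theta> \<noteq> pi"
    using calculation F0 Fpi assms by auto
  ultimately show ?thesis
    unfolding F_def norm_spherical_eigenvalue[symmetric] by (intro exI[of _ \<theta>]) auto
qed

definition radial_sequence ::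
    "complex \<Rightarrow> (nat \<Rightarrow> complex) \<Rightarrow> complex \<Rightarrow> (nat \<Rightarrow> complex) \<Rightarrow> complex \<Rightarrow>
      nat \<Rightarrow> (nat list \<Rightarrow> complex) \<Rightarrow> complex" where
  "radial_sequence lam g1 \<mu>1 g2 \<mu>2 k \<phi> =
     (lam / \<mu>1) ^ k * radial_pairing g1 \<phi> + (lam / \<mu>2) ^ k * radial_pairing g2 \<phi>"

context
  fixes g1 g2 :: "nat \<Rightarrow> complex" and \<mu>1 \<mu>2 lam :: complex and C1 C2 :: real
  assumes decay1: "\<And>n. cmod (g1 n) \<le> C1 * Q powr (- dual_rate * real n)"
    and decay2: "\<And>n. cmod (g2 n) \<le> C2 * Q powr (- dual_rate * real n)"
    and eigen1: "radial_eigen g1 \<mu>1" and eigen2: "radial_eigen g2 \<mu>2"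
begin

lemma radial_sequence_lap:
  "\<phi> \<in> Sp q p \<Longrightarrow> radial_sequence lam g1 \<mu>1 g2 \<mu>2 k (lap q \<phi>) =
     \<mu>1 * (lam / \<mu>1) ^ k * radial_pairing g1 \<phi> + \<mu>2 * (lam / \<mu>2) ^ k * radial_pairing g2 \<phi>"
  unfolding radial_sequence_def
  by (simp add: radial_pairing_lap[OF decay1 _ eigen1] radial_pairing_lap[OF decay2 _ eigen2])

lemma norm_radial_sequence_le:
  assumes "cmod \<mu>1 = cmod lam" "cmod \<mu>2 = cmod lam" "lam \<noteq> 0" "\<phi> \<in> Sp q p"
  shows "cmod (radial_sequence lam g1 \<mu>1 g2 \<mu>2 k \<phi>)
    \<le> \<bar>(C1 + C2) * (Q + 1) * (\<Sum>n. 1 / (1 + real n) ^ 2)\<bar> * nu q p 2 \<phi>"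
proof -
  have "cmod ((lam / \<mu>1) ^ k) = 1" "cmod ((lam / \<mu>2) ^ k) = 1"
    using assms by (simp_all add: norm_power norm_divide)
  then have "cmod (radial_sequence lam g1 \<mu>1 g2 \<mu>2 k \<phi>)
      \<le> cmod (radial_pairing g1 \<phi>) + cmod (radial_pairing g2 \<phi>)"
    unfolding radial_sequence_def using norm_triangle_ineq by (metis norm_mult mult_1)
  also have "\<dots> \<le> (C1 + C2) * (Q + 1) * (\<Sum>n. 1 / (1 + real n) ^ 2) * nu q p 2 \<phi>"
    using norm_radial_pairing_le[OF decay1 assms(4)] norm_radial_pairing_le[OF decay2 assms(4)]
    by (simp add: algebra_simps)
  also have "\<dots> \<le> \<bar>(C1 + C2) * (Q + 1) * (\<Sum>n. 1 / (1 + real n) ^ 2)\<bar> * nu q p 2 \<phi>"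
    using nu_nonneg[OF assms(4)] by (intro mult_right_mono) auto
  finally show ?thesis .
qed

lemma seq_cond_radial_sequence:
  assumes "lam \<noteq> 0" and "cmod \<mu>1 = cmod lam" and "cmod \<mu>2 = cmod lam"
  shows "seq_cond q p lam (radial_sequence lam g1 \<mu>1 g2 \<mu>2)"
  unfolding seq_cond_def
proof (intro conjI allI impI ballI)
  define K where "K = \<bar>(C1 + C2) * (Q + 1) * (\<Sum>n. 1 / (1 + real n) ^ 2)\<bar> + 1"
  have bound: "cmod (radial_sequence lam g1 \<mu>1 g2 \<mu>2 k \<phi>) \<le> K * nu q p 2 \<phi>" if "\<phi> \<in> Sp q p" for k \<phi>
    using norm_radial_sequence_le[OF assms(2,3,1) that, of k] nu_nonneg[OF that, of 2]
    unfolding K_def distrib_right mult_1_left by linarith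
  show "tempered q p (radial_sequence lam g1 \<mu>1 g2 \<mu>2 k)" for k
  proof (rule tempered_of_nu_bound[OF _ bound])
    show "\<forall>f\<in>Sp q p. \<forall>g\<in>Sp q p. \<forall>c.
        radial_sequence lam g1 \<mu>1 g2 \<mu>2 k (\<lambda>x. f x + g x) =
          radial_sequence lam g1 \<mu>1 g2 \<mu>2 k f + radial_sequence lam g1 \<mu>1 g2 \<mu>2 k g \<and>
        radial_sequence lam g1 \<mu>1 g2 \<mu>2 k (\<lambda>x. c * f x) = c * radial_sequence lam g1 \<mu>1 g2 \<mu>2 k f"
      unfolding radial_sequence_def
      by (auto simp: radial_pairing_add[OF decay1] radial_pairing_add[OF decay2]
          radial_pairing_scale[OF decay1] radial_pairing_scale[OF decay2] algebra_simps)
  qed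
  show "\<exists>M>0. \<exists>m. \<forall>\<phi>\<in>Sp q p. \<forall>k. cmod (radial_sequence lam g1 \<mu>1 g2 \<mu>2 k \<phi>) \<le> M * nu q p m \<phi>"
  proof (intro exI conjI ballI allI)
    show "K > 0"
      unfolding K_def by (simp add: add_nonneg_pos)
    show "cmod (radial_sequence lam g1 \<mu>1 g2 \<mu>2 k \<phi>) \<le> K * nu q p 2 \<phi>" if "\<phi> \<in> Sp q p" for \<phi> k
      using bound[OF that] .
  qed
  fix k :: nat and \<phi> assume "1 \<le> k" "\<phi> \<in> Sp q p"
  then obtain j where "k = Suc j"
    by (cases k) auto
  moreover have "\<mu> * (lam / \<mu>) ^ Suc j = lam * (lam / \<mu>) ^ j" if "\<mu> \<noteq> 0" for \<mu>
    using that by (simp add: field_simps)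
  moreover have "\<mu>1 \<noteq> 0" "\<mu>2 \<noteq> 0"
    using assms by auto
  ultimately show "radial_sequence lam g1 \<mu>1 g2 \<mu>2 k (lap q \<phi>) = lam * radial_sequence lam g1 \<mu>1 g2 \<mu>2 (k - 1) \<phi>"
    unfolding radial_sequence_lap[OF \<open>\<phi> \<in> Sp q p\<close>] by (simp add: radial_sequence_def algebra_simps)
qed

lemma radial_sequence_not_eigendist:
  assumes "g1 0 = 1" "g2 0 = 1" "\<mu>1 \<noteq> \<mu>2"
  shows "\<not> eigendist q p (radial_sequence lam g1 \<mu>1 g2 \<mu>2 0)"
proof
  assume "eigendist q p (radial_sequence lam g1 \<mu>1 g2 \<mu>2 0)"
  then obtain c where c: "\<And>\<phi>. \<phi> \<in> Sp q p \<Longrightarrow>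
      radial_sequence lam g1 \<mu>1 g2 \<mu>2 0 (lap q \<phi>) = c * radial_sequence lam g1 \<mu>1 g2 \<mu>2 0 \<phi>"
    unfolding eigendist_def by blast
  have at_vertex: "\<mu>1 * g1 (length x) + \<mu>2 * g2 (length x) = c * (g1 (length x) + g2 (length x))"
    if "x \<in> V" for x
    using c[OF dirac_Sp[OF that]] unfolding radial_sequence_lap[OF dirac_Sp[OF that]]
    by (simp add: radial_sequence_def radial_pairing_dirac[OF that])
  have "[0] \<in> V"
    using snoc_in_tree_vertices_iff[of "[]" 0 q] Nil_in_tree_vertices by (simp add: num_children_def)
  have "g1 1 = 1 - \<mu>1" "g2 1 = 1 - \<mu>2"
    using eigen1 eigen2 assms unfolding radial_eigen_def by (simp_all add: algebra_simps)
  then have root: "\<mu>1 + \<mu>2 = c * 2"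
    and child: "\<mu>1 * (1 - \<mu>1) + \<mu>2 * (1 - \<mu>2) = c * ((1 - \<mu>1) + (1 - \<mu>2))"
    using at_vertex[OF Nil_in_tree_vertices] at_vertex[OF \<open>[0] \<in> V\<close>] assms by simp_all
  have "(\<mu>1 - \<mu>2) ^ 2 = (\<mu>1 + \<mu>2) * (2 - \<mu>1 - \<mu>2) - 2 * (\<mu>1 * (1 - \<mu>1) + \<mu>2 * (1 - \<mu>2))"
    by (simp add: algebra_simps power2_eq_square)
  also have "\<dots> = 0"
    unfolding root child by (simp add: algebra_simps)
  finally have "(\<mu>1 - \<mu>2) ^ 2 = 0" .
  with assms(3) show False
    by simp
qed

end

lemma exists_non_eigen_sequence:
  assumes "lam \<noteq> 0" and "1 - kappa < cmod lam" and "cmod lam < gamma_max"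
  shows "\<exists>S. seq_cond q p lam S \<and> \<not> eigendist q p (S 0)"
proof -
  obtain \<theta> where \<theta>: "0 < \<theta>" "\<theta> < pi" "cmod (spherical_eigenvalue \<theta>) = cmod lam"
    using exists_spherical_eigenvalue_norm[OF assms(2,3)] by blast
  have "cmod (spherical_eigenvalue (- \<theta>)) = cmod lam"
    using \<theta>(3) unfolding norm_spherical_eigenvalue by simp
  moreover have "spherical_eigenvalue \<theta> \<noteq> spherical_eigenvalue (- \<theta>)"
    using sin_gt_zero[OF \<theta>(1,2)] kappa_minor_neq_0 by (simp add: spherical_eigenvalue_eq)
  moreover have radial: "\<exists>g C. (\<forall>n. cmod (g n) \<le> C * Q powr (- dual_rate * real n)) \<and> g 0 = 1 \<and>
      radial_eigen g (spherical_eigenvalue t)" for t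
  proof -
    have "cmod (of_real rho_p * cis t) = Q powr (-1/p)"
      using rho_p_pos by (simp add: norm_mult rho_p_def)
    moreover have "cmod (of_nat q * (of_real rho_p * cis t) ^ 2) = Q * rho_p ^ 2"
      by (simp add: norm_mult norm_power)
    then have "of_nat q * (of_real rho_p * cis t) ^ 2 \<noteq> 1"
      using Q_mult_rho_p_sq_lt_1 by auto
    ultimately show ?thesis
      using exists_radial_eigenfunction unfolding spherical_eigenvalue_def by blast
  qed
  obtain g1 C1 where g1: "\<And>n. cmod (g1 n) \<le> C1 * Q powr (- dual_rate * real n)" "g1 0 = 1"
      "radial_eigen g1 (spherical_eigenvalue \<theta>)"
    using radial[of \<theta>] by blast
  obtain g2 C2 where g2: "\<And>n. cmod (g2 n) \<le> C2 * Q powr (- dual_rate * real n)" "g2 0 = 1"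
      "radial_eigen g2 (spherical_eigenvalue (- \<theta>))"
    using radial[of "- \<theta>"] by blast
  ultimately show ?thesis
    using seq_cond_radial_sequence[OF g1(1) g2(1) g1(3) g2(3) assms(1) \<theta>(3)]
      radial_sequence_not_eigendist[OF g1(1) g2(1) g1(3) g2(3) g1(2) g2(2)]
    by blast
qed

lemma Re_gamma_fn_critical_line:
  "Re (gamma_fn q (of_real t + \<i> * of_real (delta (conj_exp p)))) = 1 - kappa * cos (t * ln Q)"
proof -
  define L where "L = ln Q"
  define w where "w = of_real t + \<i> * of_real (delta (conj_exp p))"
  define z1 where "z1 = (1/2 + \<i> * w) * of_real L"
  define z2 where "z2 = (1/2 - \<i> * w) * of_real L"
  have delta: "delta (conj_exp p) = 1/2 - 1/p"
    unfolding delta_def conj_exp_def using p_gt_1 by (simp add: field_simps)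
  have z1: "Re z1 = L / p" "Im z1 = t * L"
    unfolding z1_def w_def delta by (simp_all add: field_simps)
  have z2: "Re z2 = (1 - 1/p) * L" "Im z2 = - (t * L)"
    unfolding z2_def w_def delta by (simp_all add: field_simps)
  have exp: "exp (L / p) = Q powr (1/p)" "exp ((1 - 1/p) * L) = Q powr (1 - 1/p)"
    unfolding L_def powr_def using Q_gt_1 by (simp_all add: mult.commute)
  have "(of_nat q + 1 :: complex) = of_real (Q + 1)"
    by simp
  then have "Re (gamma_fn q w) = 1 - (Re (exp z1) + Re (exp z2)) / (Q + 1)"
    unfolding gamma_fn_def z1_def z2_def L_def by (simp add: Re_divide_of_real)
  also have "\<dots> = 1 - kappa * cos (t * L)"
    unfolding Re_exp z1 z2 exp kappa_def by (simp add: add_divide_distrib algebra_simps)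
  finally show ?thesis
    unfolding w_def L_def .
qed

lemma Re_gamma_fn_top: "Re (gamma_fn q (of_real (tau q / 2) + \<i> * of_real (delta (conj_exp p)))) = gamma_max"
proof -
  have "tau q / 2 * ln Q = pi"
    unfolding tau_def using Q_gt_1 by simp
  then show ?thesis
    unfolding Re_gamma_fn_critical_line gamma_max_def by simp
qed

lemma Re_gamma_fn_bottom: "Re (gamma_fn q (\<i> * of_real (delta (conj_exp p)))) = 1 - kappa"
  using Re_gamma_fn_critical_line[of 0] by simp

end

theorem lemmaB2:
  fixes q :: nat and p :: real and lam :: complex
    and T :: "nat \<Rightarrow> (nat list \<Rightarrow> complex) \<Rightarrow> complex"
  assumes "q \<ge> 2" and "1 < p" and "p < 2"
    and "lam \<noteq> 0"
    and "seq_cond q p lam T"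
  shows "(cmod lam = Re (gamma_fn q (of_real (tau q / 2) + \<i> * of_real (delta (conj_exp p))))
            \<longrightarrow> (\<forall>\<phi>\<in>Sp q p. T 0 (lap q \<phi>) = of_real (cmod lam) * T 0 \<phi>))
       \<and> (cmod lam > Re (gamma_fn q (of_real (tau q / 2) + \<i> * of_real (delta (conj_exp p))))
            \<longrightarrow> (\<forall>k. \<forall>\<phi>\<in>Sp q p. T k \<phi> = 0))
       \<and> (Re (gamma_fn q (of_real (tau q / 2) + \<i> * of_real (delta (conj_exp p)))) > cmod lam
          \<and> cmod lam > Re (gamma_fn q (\<i> * of_real (delta (conj_exp p))))
            \<longrightarrow> (\<exists>S. seq_cond q p lam S \<and> \<not> eigendist q p (S 0)))"
proof -
  interpret Lp_tree q p
    using assms(1-3) by unfold_locales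
  show ?thesis
    unfolding Re_gamma_fn_top Re_gamma_fn_bottom
    using seq_cond_eigen_at_gamma_max[OF assms(5)] seq_cond_vanishes_above_gamma_max[OF assms(5)]
      exists_non_eigen_sequence[OF assms(4)]
    by blast
qed

end
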